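(* Assume the triangulation satisfies the Xu–Zikatanov (Delaunay) condition. There exist constants $C_0,C_1>0$ depending only on the shape-regularity of the mesh such that, if $\gamma_0>C_0\sigma h_E+C_1\|\mathbf b\|_{L^\infty(\Omega)}$ for all $E\in\mathcal{E}_h$, then $\tilde a(\cdot;\cdot)$ satisfies the weak DMP property: for every $u_h\in\mathcal{V}_h$ and every interior node $x_i$ such that $u_h(x_i)\le u_h(x)$ for all $x\in\Omega_i$ and $u_h(x_i)<0$, there exist negative numbers $(c_E)_{E\in\mathcal{E}_i}$ with $$\tilde a(u_h;\psi_i)\le\sum_{E\in\mathcal{E}_i}c_E\,\big|\partial_{\mathbf t}u_h|_E\big|;$$ and symmetrically, if $u_h(x_i)\ge u_h(x)$ for all $x\in\Omega_i$ and $u_h(x_i)>0$, there exist negative $(c_E)$ with $\tilde a(u_h;\psi_i)\ge-\sum_{E\in\mathcal{E}_i}c_E|\partial_{\mathbf t}u_h|_E|$. If $\sigma=0$, the sign conditions $u_h(x_i)<0$ (resp. $>0$) can be dropped (strong DMP property).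
   Context: Setting: $\Omega\subset\mathbb{R}^2$ open bounded polygonal with Lipschitz boundary; $\varepsilon>0$, $\mathbf b\in L^\infty(\Omega)^2$ divergence-free, $\sigma\ge0$ constant; $a(u,v)=\varepsilon(\nabla u,\nabla v)_\Omega+(\mathbf b\cdot\nabla u,v)_\Omega+\sigma(u,v)_\Omega$. $\mathcal{T}_h$ is a conforming triangulation from a shape-regular family, into triangles, with nodes $x_i$ and nodal basis functions $\psi_i$; $\mathcal{V}_h$ the continuous piecewise affine space. $\mathcal{E}_h$: interior edges, $h_E=|E|$, $\partial_{\mathbf t}$ tangential derivative on $E$. For an interior node $x_i$: $\mathcal{E}_i=\{E\in\mathcal{E}_h:x_i\in E\}$, $\Omega_i$ = union of triangles containing $x_i$, $S_i=\{j\neq i:x_j\text{ shares an interior edge with }x_i\}$. $\xi_{w_h}\in\mathcal{V}_h$ has nodal values $\big|\sum_{j\in S_i}(w_h(x_i)-w_h(x_j))\big|/\sum_{j\in S_i}|w_h(x_i)-w_h(x_j)|$ (0 if the denominator vanishes); $\alpha_E(w_h)=\max_{x\in E}[\xi_{w_h}(x)]^p$ for fixed $p\in[1,\infty)$; $d_h(w_h;u_h,v_h)=\sum_{E\in\mathcal{E}_h}\gamma_0h_E^2\alpha_E(w_h)\int_E\partial_{\mathbf t}u_h\partial_{\mathbf t}v_h\,ds$ with $\gamma_0>0$; $\tilde a(w_h;v_h)=a(w_h,v_h)+d_h(w_h;w_h,v_h)$. Xu–Zikatanov condition (in 2D the Delaunay condition): for every interior edge $E$, the sum of the cotangents of the two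 angles opposite to $E$ in the two triangles sharing $E$ is nonnegative. *)

theory Defs
  imports "HOL-Analysis.Analysis" "HOL-Probability.Essential_Supremum"
begin

type_synonym pt = "real^2"

text \<open>A triangle is represented by its set of three (affinely independent) vertices;
  the closed triangle is its convex hull.\<close>

definition conforming_triangulation :: "pt set set \<Rightarrow> bool" where
  "conforming_triangulation \<T> \<longleftrightarrow> finite \<T> \<and> \<T> \<noteq> {} \<and>
     (\<forall>T\<in>\<T>. card T = 3 \<and> \<not> affine_dependent T) \<and>
     (\<forall>T1\<in>\<T>. \<forall>T2\<in>\<T>. convex hull T1 \<inter> convex hull T2 = convex hull (T1 \<inter> T2))"

definition dom_of :: "pt set set \<Rightarrow> pt set" where
  "dom_of \<T> = interior (\<Union>T\<in>\<T>. convex hull T)"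

definition nodes :: "pt set set \<Rightarrow> pt set" where
  "nodes \<T> = \<Union>\<T>"

definition interior_node :: "pt set set \<Rightarrow> pt \<Rightarrow> bool" where
  "interior_node \<T> x \<longleftrightarrow> x \<in> nodes \<T> \<and> x \<in> dom_of \<T>"

definition edges :: "pt set set \<Rightarrow> pt set set" where
  "edges \<T> = {E. card E = 2 \<and> (\<exists>T\<in>\<T>. E \<subseteq> T)}"

definition int_edges :: "pt set set \<Rightarrow> pt set set" where
  "int_edges \<T> = {E\<in>edges \<T>. card {T\<in>\<T>. E \<subseteq> T} = 2}"

definition edges_at :: "pt set set \<Rightarrow> pt \<Rightarrow> pt set set" where
  "edges_at \<T> x = {E\<in>int_edges \<T>. x \<in> E}"

definition nbrs :: "pt set set \<Rightarrow> pt \<Rightarrow> pt set" where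
  "nbrs \<T> x = {y. y \<noteq> x \<and> {x, y} \<in> int_edges \<T>}"

definition patch :: "pt set set \<Rightarrow> pt \<Rightarrow> pt set" where
  "patch \<T> x = (\<Union>T\<in>{T\<in>\<T>. x \<in> T}. convex hull T)"

definition hE :: "pt set \<Rightarrow> real" where
  "hE E = (SOME h. \<exists>a b. E = {a, b} \<and> h = dist a b)"

definition Vh :: "pt set set \<Rightarrow> (pt \<Rightarrow> real) set" where
  "Vh \<T> = {w. continuous_on (\<Union>T\<in>\<T>. convex hull T) w \<and>
     (\<forall>T\<in>\<T>. \<exists>g c. \<forall>x\<in>convex hull T. w x = g \<bullet> x + c)}"

definition tgrad :: "pt set \<Rightarrow> (pt \<Rightarrow> real) \<Rightarrow> pt" where
  "tgrad T w = (THE g. \<exists>c. \<forall>x\<in>convex hull T. w x = g \<bullet> x + c)"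

definition a_form :: "pt set set \<Rightarrow> real \<Rightarrow> (pt \<Rightarrow> pt) \<Rightarrow> real \<Rightarrow>
    (pt \<Rightarrow> real) \<Rightarrow> (pt \<Rightarrow> real) \<Rightarrow> real" where
  "a_form \<T> \<epsilon> b \<sigma> u v = (\<Sum>T\<in>\<T>.
      \<epsilon> * (LINT x:convex hull T|lebesgue. tgrad T u \<bullet> tgrad T v)
    + (LINT x:convex hull T|lebesgue. (b x \<bullet> tgrad T u) * v x)
    + \<sigma> * (LINT x:convex hull T|lebesgue. u x * v x))"

text \<open>Tangential derivative data on an edge \<open>E = {a,b}\<close>:
  \<open>\<integral>_E \<partial>_t u \<partial>_t v ds\<close> and \<open>|\<partial>_t u|_E|\<close> for piecewise affine \<open>u, v\<close>
  (on the segment these functions are affine, so \<open>\<partial>_t\<close> is constant).\<close>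
definition edge_int_tt :: "pt set \<Rightarrow> (pt \<Rightarrow> real) \<Rightarrow> (pt \<Rightarrow> real) \<Rightarrow> real" where
  "edge_int_tt E u v = (SOME r. \<exists>a b. E = {a, b} \<and>
      r = dist a b * (((u b - u a) / dist a b) * ((v b - v a) / dist a b)))"

definition abs_tder :: "pt set \<Rightarrow> (pt \<Rightarrow> real) \<Rightarrow> real" where
  "abs_tder E u = (SOME r. \<exists>a b. E = {a, b} \<and> r = \<bar>u b - u a\<bar> / dist a b)"

definition xi_node :: "pt set set \<Rightarrow> (pt \<Rightarrow> real) \<Rightarrow> pt \<Rightarrow> real" where
  "xi_node \<T> w x = (let D = (\<Sum>y\<in>nbrs \<T> x. \<bar>w x - w y\<bar>) in
     if D = 0 then 0 else \<bar>\<Sum>y\<in>nbrs \<T> x. (w x - w y)\<bar> / D)"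

text \<open>\<open>\<alpha>_E(w) = max_{x\<in>E} \<xi>_w(x)^p\<close>; on \<open>E = [a,b]\<close> the P1 function \<open>\<xi>_w\<close> is
  the linear interpolant of its endpoint values.\<close>
definition alpha_E :: "pt set set \<Rightarrow> real \<Rightarrow> (pt \<Rightarrow> real) \<Rightarrow> pt set \<Rightarrow> real" where
  "alpha_E \<T> p w E = (SOME r. \<exists>a b. E = {a, b} \<and>
     r = (SUP t\<in>{0..1}. ((1 - t) * xi_node \<T> w a + t * xi_node \<T> w b) powr p))"

definition d_form :: "pt set set \<Rightarrow> real \<Rightarrow> real \<Rightarrow> (pt \<Rightarrow> real) \<Rightarrow>
    (pt \<Rightarrow> real) \<Rightarrow> (pt \<Rightarrow> real) \<Rightarrow> real" where
  "d_form \<T> \<gamma>0 p w u v = (\<Sum>E\<in>int_edges \<T>.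
      \<gamma>0 * (hE E)\<^sup>2 * alpha_E \<T> p w E * edge_int_tt E u v)"

definition a_tilde :: "pt set set \<Rightarrow> real \<Rightarrow> (pt \<Rightarrow> pt) \<Rightarrow> real \<Rightarrow> real \<Rightarrow> real \<Rightarrow>
    (pt \<Rightarrow> real) \<Rightarrow> (pt \<Rightarrow> real) \<Rightarrow> real" where
  "a_tilde \<T> \<epsilon> b \<sigma> \<gamma>0 p w v = a_form \<T> \<epsilon> b \<sigma> w v + d_form \<T> \<gamma>0 p w w v"

definition angle_at :: "pt \<Rightarrow> pt \<Rightarrow> pt \<Rightarrow> real" where
  "angle_at c a b = arccos (((a - c) \<bullet> (b - c)) / (norm (a - c) * norm (b - c)))"

definition xu_zikatanov :: "pt set set \<Rightarrow> bool" where
  "xu_zikatanov \<T> \<longleftrightarrow> (\<forall>T1\<in>\<T>. \<forall>T2\<in>\<T>. \<forall>a b c d.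
      T1 \<noteq> T2 \<and> T1 = {a, b, c} \<and> T2 = {a, b, d} \<and> a \<noteq> b \<and> c \<notin> {a, b} \<and> d \<notin> {a, b}
      \<longrightarrow> cot (angle_at c a b) + cot (angle_at d a b) \<ge> 0)"

definition shape_regular :: "real \<Rightarrow> pt set set \<Rightarrow> bool" where
  "shape_regular \<kappa> \<T> \<longleftrightarrow> (\<forall>T\<in>\<T>. (diameter (convex hull T))\<^sup>2 \<le> \<kappa> * measure lebesgue (convex hull T))"

definition Linf_field :: "pt set \<Rightarrow> (pt \<Rightarrow> pt) \<Rightarrow> bool" where
  "Linf_field \<Omega> b \<longleftrightarrow> b \<in> borel_measurable (restrict_space lebesgue \<Omega>) \<and>
     esssup (restrict_space lebesgue \<Omega>) (\<lambda>x. ereal (norm (b x))) < \<infinity>"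

definition Linf_norm :: "pt set \<Rightarrow> (pt \<Rightarrow> pt) \<Rightarrow> real" where
  "Linf_norm \<Omega> b = real_of_ereal (esssup (restrict_space lebesgue \<Omega>) (\<lambda>x. ereal (norm (b x))))"

definition div_free :: "pt set \<Rightarrow> (pt \<Rightarrow> pt) \<Rightarrow> bool" where
  "div_free \<Omega> b \<longleftrightarrow> (\<forall>\<phi> G. (\<forall>x. (\<phi> has_derivative (\<lambda>h. G x \<bullet> h)) (at x)) \<and> continuous_on UNIV G \<and>
      compact (closure {x. \<phi> x \<noteq> 0}) \<and> closure {x. \<phi> x \<noteq> 0} \<subseteq> \<Omega>
      \<longrightarrow> (LINT x:\<Omega>|lebesgue. b x \<bullet> G x) = 0)"

end

theory Submission
  imports Defs
begin

text \<open>Test the stabilized form against the hat function \<open>\<psi>\<^sub>i\<close> at a local minimum \<open>x\<^sub>i\<close>. On each triangle of the patch the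
  diffusion term is given by the cotangent formula, \<open>-(\<epsilon>/2) \<Sigma> cot \<theta>\<^sub>E (u\<^sub>j - u\<^sub>i)\<close> with
  \<open>\<theta>\<^sub>E\<close> the angle opposite the edge \<open>E = [x\<^sub>i,x\<^sub>j]\<close>, while shape regularity bounds the convection
  and reaction terms by \<open>\<kappa>\<parallel>b\<parallel>\<^sub>\<infinity>h\<^sub>E/4\<close> and \<open>\<kappa>\<sigma>h\<^sub>E\<^sup>2/4\<close> times \<open>u\<^sub>j - u\<^sub>i \<ge> 0\<close> (for the reaction
  term because \<open>u\<^sub>i < 0\<close> or \<open>\<sigma> = 0\<close>). Every edge at an interior node is shared by two triangles,
  and the Delaunay condition makes the sum of the two cotangent terms nonpositive. Whenever some
  \<open>u\<^sub>j > u\<^sub>i\<close>, the shock detector equals 1 at \<open>x\<^sub>i\<close>, so \<open>\<alpha>\<^sub>E = 1\<close> and the stabilization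
  contributes \<open>-\<gamma>\<^sub>0h\<^sub>E(u\<^sub>j - u\<^sub>i)\<close>. Altogether
  \<open>a_tilde u \<psi>\<^sub>i \<le> \<Sigma>\<^sub>E h\<^sub>E(\<kappa>\<parallel>b\<parallel>\<^sub>\<infinity>/2 + \<kappa>\<sigma>h\<^sub>E/2 - \<gamma>\<^sub>0)(u\<^sub>j - u\<^sub>i)\<close>, which has the required
  form once \<open>\<gamma>\<^sub>0\<close> dominates; maxima are reduced to minima via \<open>-u\<close>. The convection term is
  bounded crudely by \<open>\<parallel>b\<parallel>\<^sub>\<infinity>\<close>.\<close>

section \<open>Planar geometry\<close>

definition cross2 :: "pt \<Rightarrow> pt \<Rightarrow> real" where
  "cross2 u v = u$1 * v$2 - u$2 * v$1"

lemma inner_vec2: "(u::pt) \<bullet> v = u$1 * v$1 + u$2 * v$2"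
  by (simp add: inner_vec_def sum_2)

lemma vec2_eq_iff: "(u::pt) = v \<longleftrightarrow> u$1 = v$1 \<and> u$2 = v$2"
  by (simp add: vec_eq_iff forall_2)

lemma norm_vec2_power2: "(norm (u::pt))\<^sup>2 = (u$1)\<^sup>2 + (u$2)\<^sup>2"
  by (simp only: power2_norm_eq_inner inner_vec2) (simp add: power2_eq_square)

lemma cross2_add_scaleR_left: "cross2 (s *\<^sub>R u + t *\<^sub>R v) w = s * cross2 u w + t * cross2 v w"
  unfolding cross2_def by (simp add: algebra_simps)

lemma cross2_add_scaleR_right: "cross2 w (s *\<^sub>R u + t *\<^sub>R v) = s * cross2 w u + t * cross2 w v"
  unfolding cross2_def by (simp add: algebra_simps)

lemma cross2_self [simp]: "cross2 u u = 0"
  unfolding cross2_def by simp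

lemma cross2_commute: "cross2 u v = - cross2 v u"
  unfolding cross2_def by simp

lemma cross2_shift: "cross2 (x - z) (y - z) = cross2 (y - x) (z - x)"
  unfolding cross2_def by (simp add: algebra_simps)

lemma measure_triangle:
  "measure lebesgue (convex hull {a,b,c::pt}) = \<bar>cross2 (b - a) (c - a)\<bar> / 2"
proof -
  have "convex hull {a,b,c} \<in> sets borel"
    by (intro borel_closed compact_imp_closed finite_imp_compact_convex_hull) auto
  then have "measure lebesgue (convex hull {a,b,c}) = measure lborel (convex hull {a,b,c})"
    by simp
  also have "\<dots> = \<bar>cross2 (b - a) (c - a)\<bar> / 2"
    unfolding content_triangle cross2_def by (simp add: abs_minus_commute algebra_simps)
  finally show ?thesis .
qed

lemma cross2_power2_add_inner_power2: "(cross2 e f)\<^sup>2 + (e \<bullet> f)\<^sup>2 = (norm e)\<^sup>2 * (norm f)\<^sup>2"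
  unfolding cross2_def inner_vec2 norm_vec2_power2 by algebra

lemma abs_cross2_le: "\<bar>cross2 e f\<bar> \<le> norm e * norm f"
proof -
  have "(cross2 e f)\<^sup>2 \<le> (norm e)\<^sup>2 * (norm f)\<^sup>2"
    using cross2_power2_add_inner_power2[of e f] zero_le_power2[of "e \<bullet> f"] by linarith
  then have "(cross2 e f)\<^sup>2 \<le> (norm e * norm f)\<^sup>2"
    by (simp add: power_mult_distrib)
  then have "\<bar>cross2 e f\<bar> \<le> \<bar>norm e * norm f\<bar>"
    using abs_le_square_iff by blast
  then show ?thesis
    by simp
qed

lemma cot_angle_at:
  assumes "cross2 (y - x) (z - x) \<noteq> 0"
  shows "cot (angle_at z x y) = ((x - z) \<bullet> (y - z)) / \<bar>cross2 (y - x) (z - x)\<bar>"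
proof -
  define D where "D = \<bar>cross2 (y - x) (z - x)\<bar>"
  define n where "n = norm (x - z) * norm (y - z)"
  define t where "t = ((x - z) \<bullet> (y - z)) / n"
  have "x \<noteq> z" "y \<noteq> z"
    using assms unfolding cross2_def by (auto simp: algebra_simps)
  then have n: "n > 0"
    by (simp add: n_def)
  have "D\<^sup>2 + ((x - z) \<bullet> (y - z))\<^sup>2 = n\<^sup>2"
    using cross2_power2_add_inner_power2[of "x - z" "y - z"] cross2_shift[of x z y]
    by (simp add: D_def n_def power_mult_distrib)
  then have t: "1 - t\<^sup>2 = D\<^sup>2 / n\<^sup>2"
    using n by (simp add: t_def field_simps)
  then have "t\<^sup>2 \<le> 1"
    by (metis diff_ge_0_iff_ge divide_nonneg_nonneg zero_le_power2)
  then have t1: "-1 \<le> t" "t \<le> 1"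
    using abs_le_square_iff[of t 1] by auto
  have "sin (arccos t) = D / n"
    using sin_arccos[OF t1] t n by (simp add: real_sqrt_divide D_def)
  moreover have "angle_at z x y = arccos t"
    unfolding angle_at_def t_def n_def ..
  ultimately have "cot (angle_at z x y) = t / (D / n)"
    using cos_arccos[OF t1] by (simp add: cot_def)
  also have "\<dots> = ((x - z) \<bullet> (y - z)) / D"
    using n by (simp add: t_def)
  finally show ?thesis
    unfolding D_def .
qed

lemma cross2_barycentric:
  assumes "u + v + w = 1"
  shows "cross2 ((u *\<^sub>R a + v *\<^sub>R b + w *\<^sub>R c) - a) (c - a) = v * cross2 (b - a) (c - a)"
    and "cross2 (b - a) ((u *\<^sub>R a + v *\<^sub>R b + w *\<^sub>R c) - a) = w * cross2 (b - a) (c - a)"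
proof -
  have u: "u = 1 - v - w"
    using assms by simp
  show "cross2 ((u *\<^sub>R a + v *\<^sub>R b + w *\<^sub>R c) - a) (c - a) = v * cross2 (b - a) (c - a)"
    unfolding u cross2_def by (simp add: algebra_simps)
  show "cross2 (b - a) ((u *\<^sub>R a + v *\<^sub>R b + w *\<^sub>R c) - a) = w * cross2 (b - a) (c - a)"
    unfolding u cross2_def by (simp add: algebra_simps)
qed

lemma barycentric_coordinates:
  fixes p :: pt
  assumes D: "cross2 (b - a) (c - a) \<noteq> 0"
  defines "\<beta> \<equiv> cross2 (p - a) (c - a) / cross2 (b - a) (c - a)"
    and "\<gamma> \<equiv> cross2 (b - a) (p - a) / cross2 (b - a) (c - a)"
  shows "p = (1 - \<beta> - \<gamma>) *\<^sub>R a + \<beta> *\<^sub>R b + \<gamma> *\<^sub>R c"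
proof -
  let ?D = "cross2 (b - a) (c - a)"
  have "?D *\<^sub>R p = (?D - cross2 (p - a) (c - a) - cross2 (b - a) (p - a)) *\<^sub>R a
      + cross2 (p - a) (c - a) *\<^sub>R b + cross2 (b - a) (p - a) *\<^sub>R c"
    unfolding vec2_eq_iff cross2_def by (simp add: algebra_simps)
  also have "\<dots> = (?D - \<beta> * ?D - \<gamma> * ?D) *\<^sub>R a + (\<beta> * ?D) *\<^sub>R b + (\<gamma> * ?D) *\<^sub>R c"
    using D by (simp add: \<beta>_def \<gamma>_def)
  also have "\<dots> = ?D *\<^sub>R ((1 - \<beta> - \<gamma>) *\<^sub>R a + \<beta> *\<^sub>R b + \<gamma> *\<^sub>R c)"
    by (simp add: algebra_simps)
  finally show ?thesis
    using D by simp
qed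

lemma barycentric_unique:
  assumes D: "cross2 (b - a) (c - a) \<noteq> 0" and s: "u + v + w = 1" "u' + v' + w' = 1"
    and eq: "u *\<^sub>R a + v *\<^sub>R b + w *\<^sub>R c = u' *\<^sub>R a + v' *\<^sub>R b + w' *\<^sub>R c"
  shows "v = v'" "w = w'"
proof -
  let ?p = "u *\<^sub>R a + v *\<^sub>R b + w *\<^sub>R c" and ?p' = "u' *\<^sub>R a + v' *\<^sub>R b + w' *\<^sub>R c"
  have "cross2 (?p - a) (c - a) = cross2 (?p' - a) (c - a)"
    "cross2 (b - a) (?p - a) = cross2 (b - a) (?p' - a)"
    using eq by simp_all
  then show "v = v'" "w = w'"
    using D unfolding cross2_barycentric[OF s(1)] cross2_barycentric[OF s(2)] by simp_all
qed

lemma convex_hull_barycentric_nonneg: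
  assumes D: "cross2 (b - a) (c - a) \<noteq> 0" and s: "u + v + w = 1"
    and p: "u *\<^sub>R a + v *\<^sub>R b + w *\<^sub>R c \<in> convex hull {a,b,c}"
  shows "0 \<le> u" "0 \<le> v" "0 \<le> w"
proof -
  obtain u' v' w' where uvw': "0 \<le> u'" "0 \<le> v'" "0 \<le> w'" "u' + v' + w' = 1"
    "u *\<^sub>R a + v *\<^sub>R b + w *\<^sub>R c = u' *\<^sub>R a + v' *\<^sub>R b + w' *\<^sub>R c"
    using p unfolding convex_hull_3 by blast
  then have "v = v'" "w = w'"
    using barycentric_unique[OF D s uvw'(4)] by blast+
  then show "0 \<le> u" "0 \<le> v" "0 \<le> w"
    using s uvw'(1-4) by linarith+
qed

lemma convex_hull_3I:
  "0 \<le> u \<Longrightarrow> 0 \<le> v \<Longrightarrow> 0 \<le> w \<Longrightarrow> u + v + w = 1 \<Longrightarrow> u *\<^sub>R a + v *\<^sub>R b + w *\<^sub>R c \<in> convex hull {a,b,c}"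
  unfolding convex_hull_3 by blast

lemma cross2_segment:
  assumes "p \<in> convex hull {a, b}"
  shows "cross2 (b - a) (p - a) = 0"
proof -
  obtain u v where uv: "p = u *\<^sub>R a + v *\<^sub>R b" "u + v = 1"
    using assms unfolding convex_hull_2 by blast
  then have "u = 1 - v"
    by simp
  with uv have "p - a = v *\<^sub>R (b - a)"
    unfolding vec2_eq_iff by (simp add: algebra_simps)
  then show ?thesis
    unfolding cross2_def by simp
qed

lemma shape_regular_triangle:
  assumes sreg: "(diameter (convex hull {x,y,z}))\<^sup>2 \<le> \<kappa> * measure lebesgue (convex hull {x,y,z})"
    and xy: "x \<noteq> y"
  shows "cross2 (y - x) (z - x) \<noteq> 0" "\<kappa> > 0"
    and "diameter (convex hull {x,y,z}) \<le> \<kappa> * dist x y / 2"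
    and "measure lebesgue (convex hull {x,y,z}) \<le> \<kappa> * (dist x y)\<^sup>2 / 4"
proof -
  define d where "d = diameter (convex hull {x,y,z})"
  define M where "M = measure lebesgue (convex hull {x,y,z})"
  have "dist x y \<le> d" "dist x z \<le> d"
    unfolding d_def by (auto intro!: diameter_bounded_bound finite_imp_bounded_convex_hull hull_inc)
  moreover have "dist x y > 0"
    using xy by simp
  ultimately have d: "d > 0" "dist x z \<le> d"
    by linarith+
  have M: "M \<le> dist x y * dist x z / 2"
    using abs_cross2_le[of "y - x" "z - x"] unfolding M_def measure_triangle
    by (simp add: dist_norm norm_minus_commute)
  have "d * d \<le> \<kappa> * M"
    using sreg by (simp add: d_def M_def power2_eq_square)
  moreover have "0 < d * d"
    using d by simp
  ultimately have pos: "0 < \<kappa> * M"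
    by linarith
  then show "cross2 (y - x) (z - x) \<noteq> 0"
    by (auto simp: M_def measure_triangle)
  show "\<kappa> > 0"
    using pos by (simp add: M_def zero_less_mult_iff)
  then have "\<kappa> * M \<le> \<kappa> * (dist x y * d / 2)"
    using M d(2) by (intro mult_left_mono order_trans[OF M]) (auto intro: mult_left_mono)
  with \<open>d * d \<le> \<kappa> * M\<close> have "d * d \<le> (\<kappa> * dist x y / 2) * d"
    by simp
  then show dle: "d \<le> \<kappa> * dist x y / 2"
    using d(1) by simp
  have "M \<le> dist x y * d / 2"
    using M d(2) by (smt (verit) zero_le_dist mult_left_mono divide_right_mono)
  also have "\<dots> \<le> dist x y * (\<kappa> * dist x y / 2) / 2"
    using mult_left_mono[OF dle zero_le_dist] by (rule divide_right_mono) simp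
  also have "\<dots> = \<kappa> * (dist x y)\<^sup>2 / 4"
    by (simp add: power2_eq_square ac_simps)
  finally show "M \<le> \<kappa> * (dist x y)\<^sup>2 / 4" .
qed

lemma small_positive_scale:
  fixes a b :: real
  assumes "0 \<le> b"
  obtains t where "t > 0" "t \<le> 1/4" "t * \<bar>a\<bar> \<le> 1/4" "t * b \<le> 1/4"
proof -
  define Q where "Q = 1 + \<bar>a\<bar> + b"
  have Q: "Q > 0" "1 \<le> Q" "\<bar>a\<bar> \<le> Q" "b \<le> Q"
    using assms by (simp_all add: Q_def)
  have small: "r / (4 * Q) \<le> 1/4" if "r \<le> Q" for r
    using divide_right_mono[OF that, of "4 * Q"] \<open>Q > 0\<close> by simp
  show thesis
    using small[OF Q(2)] small[OF Q(3)] small[OF Q(4)] \<open>Q > 0\<close>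
    by (intro that[of "1 / (4 * Q)"]) simp_all
qed

text \<open>If \<open>z\<close> and \<open>z'\<close> lie strictly on the same side of the line \<open>xy\<close>, the triangles \<open>xyz\<close>
  and \<open>xyz'\<close> share a point off that line: take a point of \<open>xyz\<close> close to the midpoint of \<open>xy\<close>.\<close>

lemma same_side_common_point:
  assumes pos: "cross2 (y - x) (z - x) * cross2 (y - x) (z' - x) > 0"
  shows "\<exists>p \<in> convex hull {x,y,z} \<inter> convex hull {x,y,z'}. cross2 (y - x) (p - x) \<noteq> 0"
proof -
  define D D' where "D = cross2 (y - x) (z - x)" and "D' = cross2 (y - x) (z' - x)"
  define \<beta> where "\<beta> = cross2 (z - x) (z' - x) / D'"
  define \<rho> where "\<rho> = D / D'"
  have "D \<noteq> 0" "D' \<noteq> 0" "\<rho> > 0"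
    using pos by (auto simp: D_def D'_def \<rho>_def zero_less_mult_iff zero_less_divide_iff)
  obtain t where t: "t > 0" "t \<le> 1/4" "t * \<bar>\<beta>\<bar> \<le> 1/4" "t * \<rho> \<le> 1/4"
    using small_positive_scale[of \<rho> \<beta>] \<open>\<rho> > 0\<close> by auto
  define p where "p = ((1 - t) / 2) *\<^sub>R x + ((1 - t) / 2) *\<^sub>R y + t *\<^sub>R z"
  have "p \<in> convex hull {x,y,z}"
    unfolding p_def using t by (intro convex_hull_3I) auto
  have px: "p - x = ((1 - t) / 2) *\<^sub>R (y - x) + t *\<^sub>R (z - x)"
    unfolding p_def vec2_eq_iff by (simp add: algebra_simps)
  have off: "cross2 (y - x) (p - x) = t * D"
    unfolding px cross2_add_scaleR_right D_def by simp
  define \<beta>' \<gamma>' where "\<beta>' = cross2 (p - x) (z' - x) / D'" and "\<gamma>' = cross2 (y - x) (p - x) / D'"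
  have \<beta>': "\<beta>' = 1/2 - t/2 + t * \<beta>"
    using \<open>D' \<noteq> 0\<close> unfolding \<beta>'_def px cross2_add_scaleR_left \<beta>_def D'_def by (simp add: field_simps)
  have \<gamma>': "\<gamma>' = t * \<rho>"
    unfolding \<gamma>'_def off \<rho>_def by simp
  have "- (t * \<bar>\<beta>\<bar>) \<le> t * \<beta>" "t * \<beta> \<le> t * \<bar>\<beta>\<bar>"
    using mult_left_mono[of "- \<bar>\<beta>\<bar>" \<beta> t] mult_left_mono[of \<beta> "\<bar>\<beta>\<bar>" t] t(1) by simp_all
  moreover have "0 \<le> t * \<rho>"
    using t(1) \<open>\<rho> > 0\<close> by simp
  ultimately have "0 \<le> \<beta>' \<and> 0 \<le> \<gamma>' \<and> 0 \<le> 1 - \<beta>' - \<gamma>'"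
    using \<beta>' \<gamma>' t by (intro conjI; linarith)
  moreover have "p = (1 - \<beta>' - \<gamma>') *\<^sub>R x + \<beta>' *\<^sub>R y + \<gamma>' *\<^sub>R z'"
    using barycentric_coordinates[of y x z' p] \<open>D' \<noteq> 0\<close> unfolding \<beta>'_def \<gamma>'_def D'_def by simp
  ultimately have "p \<in> convex hull {x,y,z'}"
    using convex_hull_3I[of "1 - \<beta>' - \<gamma>'" \<beta>' \<gamma>' x y z'] by simp
  moreover have "cross2 (y - x) (p - x) \<noteq> 0"
    using off t \<open>D \<noteq> 0\<close> by simp
  ultimately show ?thesis
    using \<open>p \<in> convex hull {x,y,z}\<close> by blast
qed

section \<open>Affine functions on a triangle\<close>

lemma affine_convex_combination3:
  assumes f: "\<forall>q\<in>convex hull {a,b,c}. f q = g \<bullet> q + k"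
    and uvw: "u + v + w = 1" "0 \<le> u" "0 \<le> v" "0 \<le> w"
  shows "f (u *\<^sub>R a + v *\<^sub>R b + w *\<^sub>R c) = u * f a + v * f b + w * f c"
proof -
  have abc: "a \<in> convex hull {a,b,c}" "b \<in> convex hull {a,b,c}" "c \<in> convex hull {a,b,c}"
    by (auto intro: hull_inc)
  have "u *\<^sub>R a + v *\<^sub>R b + w *\<^sub>R c \<in> convex hull {a,b,c}"
    using uvw by (intro convex_hull_3I)
  then have "f (u *\<^sub>R a + v *\<^sub>R b + w *\<^sub>R c) = u * (g \<bullet> a) + v * (g \<bullet> b) + w * (g \<bullet> c) + (u + v + w) * k"
    using f uvw(1) by (simp add: inner_add_right)
  also have "\<dots> = u * f a + v * f b + w * f c"
    using f abc by (simp add: algebra_simps)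
  finally show ?thesis .
qed

lemma vec2_eq_if_inner_eq:
  assumes "cross2 e f \<noteq> 0" "g \<bullet> e = h \<bullet> e" "g \<bullet> f = h \<bullet> f"
  shows "g = h"
proof -
  have "cross2 e f * (g$1 - h$1) = f$2 * (g \<bullet> e - h \<bullet> e) - e$2 * (g \<bullet> f - h \<bullet> f)"
    "cross2 e f * (g$2 - h$2) = e$1 * (g \<bullet> f - h \<bullet> f) - f$1 * (g \<bullet> e - h \<bullet> e)"
    unfolding cross2_def inner_vec2 by (simp_all add: algebra_simps)
  with assms show ?thesis
    unfolding vec2_eq_iff by auto
qed

lemma tgrad_eqI:
  assumes D: "cross2 (b - a) (c - a) \<noteq> 0" and w: "\<forall>q\<in>convex hull {a,b,c}. w q = g \<bullet> q + k"
  shows "tgrad {a,b,c} w = g"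
  unfolding tgrad_def
proof (rule the_equality)
  show "\<exists>k. \<forall>q\<in>convex hull {a,b,c}. w q = g \<bullet> q + k"
    using w by blast
next
  fix g' assume "\<exists>k'. \<forall>q\<in>convex hull {a,b,c}. w q = g' \<bullet> q + k'"
  then obtain k' where w': "\<forall>q\<in>convex hull {a,b,c}. w q = g' \<bullet> q + k'"
    by blast
  have "a \<in> convex hull {a,b,c}" "b \<in> convex hull {a,b,c}" "c \<in> convex hull {a,b,c}"
    by (auto intro: hull_inc)
  then have "g \<bullet> a + k = g' \<bullet> a + k'" "g \<bullet> b + k = g' \<bullet> b + k'" "g \<bullet> c + k = g' \<bullet> c + k'"
    using w w' by metis+
  then have "g' \<bullet> (b - a) = g \<bullet> (b - a)" "g' \<bullet> (c - a) = g \<bullet> (c - a)"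
    by (auto simp: inner_diff_right)
  then show "g' = g"
    using vec2_eq_if_inner_eq D by blast
qed

lemma inner_mult_cross2_power2:
  "(g \<bullet> h) * (cross2 e f)\<^sup>2 = (g \<bullet> e) * (h \<bullet> e) * (f \<bullet> f) + (g \<bullet> f) * (h \<bullet> f) * (e \<bullet> e)
     - ((g \<bullet> e) * (h \<bullet> f) + (g \<bullet> f) * (h \<bullet> e)) * (e \<bullet> f)"
  unfolding cross2_def inner_vec2 by (simp add: power2_eq_square algebra_simps)

lemma norm_mult_abs_cross2_le: "norm g * \<bar>cross2 e f\<bar> \<le> \<bar>g \<bullet> e\<bar> * norm f + \<bar>g \<bullet> f\<bar> * norm e"
proof -
  have "(norm g * \<bar>cross2 e f\<bar>)\<^sup>2 = (norm ((g \<bullet> e) *\<^sub>R f - (g \<bullet> f) *\<^sub>R e))\<^sup>2"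
    unfolding power_mult_distrib norm_vec2_power2 cross2_def inner_vec2
    by (simp add: power2_eq_square algebra_simps)
  then have "norm g * \<bar>cross2 e f\<bar> = norm ((g \<bullet> e) *\<^sub>R f - (g \<bullet> f) *\<^sub>R e)"
    by (rule power2_eq_imp_eq) auto
  also have "\<dots> \<le> norm ((g \<bullet> e) *\<^sub>R f) + norm ((g \<bullet> f) *\<^sub>R e)"
    by (rule norm_triangle_ineq4)
  finally show ?thesis
    by simp
qed

text \<open>The cotangent formula for the P1 stiffness matrix; \<open>gp\<close> is the gradient of the hat
  function at \<open>x\<close>.\<close>

lemma measure_triangle_mult_inner_grad:
  assumes D: "cross2 (y - x) (z - x) \<noteq> 0"
    and gu: "gu \<bullet> (y - x) = dy" "gu \<bullet> (z - x) = dz" and gp: "gp \<bullet> (y - x) = -1" "gp \<bullet> (z - x) = -1"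
  shows "measure lebesgue (convex hull {x,y,z}) * (gu \<bullet> gp)
    = - (cot (angle_at z x y) * dy + cot (angle_at y x z) * dz) / 2"
proof -
  define A where "A = \<bar>cross2 (y - x) (z - x)\<bar>"
  define P Q where "P = (x - z) \<bullet> (y - z)" and "Q = (x - y) \<bullet> (z - y)"
  have A: "A > 0" "(cross2 (y - x) (z - x))\<^sup>2 = A * A"
    using D by (simp_all add: A_def power2_eq_square)
  have PQ: "P = (z - x) \<bullet> (z - x) - (y - x) \<bullet> (z - x)" "Q = (y - x) \<bullet> (y - x) - (y - x) \<bullet> (z - x)"
    unfolding P_def Q_def by (simp_all add: inner_vec2 algebra_simps)
  have "(gu \<bullet> gp) * (A * A) = - (dy * P + dz * Q)"
    unfolding PQ inner_mult_cross2_power2 gu gp A(2)[symmetric] by (simp add: algebra_simps inner_commute)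
  moreover have "P = A * cot (angle_at z x y)"
    using cot_angle_at[OF D] A by (simp add: A_def P_def)
  moreover have "Q = A * cot (angle_at y x z)"
    using cot_angle_at[where y=z and z=y] D A cross2_commute[of "z - x" "y - x"] by (simp add: A_def Q_def)
  ultimately have "A * (A * (gu \<bullet> gp)) = A * - (cot (angle_at z x y) * dy + cot (angle_at y x z) * dz)"
    by (simp add: algebra_simps)
  then have "A * (gu \<bullet> gp) = - (cot (angle_at z x y) * dy + cot (angle_at y x z) * dz)"
    using A by simp
  then show ?thesis
    unfolding measure_triangle A_def[symmetric] by simp
qed

lemma hat_function_triangle_bounds:
  fixes x y z :: pt
  assumes u: "\<forall>q\<in>convex hull {x,y,z}. u q = gu \<bullet> q + cu"
    and \<psi>: "\<forall>q\<in>convex hull {x,y,z}. \<psi> q = gp \<bullet> q + cp" "\<psi> x = 1" "\<psi> y = 0" "\<psi> z = 0"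
    and min: "u x \<le> u y" "u x \<le> u z" and q: "q \<in> convex hull {x,y,z}"
  shows "0 \<le> \<psi> q \<and> \<psi> q \<le> 1 \<and> u x \<le> u q \<and> u q - u x \<le> (u y - u x) + (u z - u x)"
proof -
  obtain a b c where abc: "0 \<le> a" "0 \<le> b" "0 \<le> c" "a + b + c = 1" "q = a *\<^sub>R x + b *\<^sub>R y + c *\<^sub>R z"
    using q unfolding convex_hull_3 by blast
  have "\<psi> q = a"
    using affine_convex_combination3[OF \<psi>(1) abc(4,1-3)] \<psi>(2-4) abc(5) by simp
  moreover have "u q = (1 - b - c) * u x + b * u y + c * u z"
    using affine_convex_combination3[OF u abc(4,1-3)] abc(4,5) by (simp add: eq_diff_eq)
  then have "u q - u x = b * (u y - u x) + c * (u z - u x)"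
    by (simp add: algebra_simps)
  moreover have "0 \<le> b * (u y - u x)" "0 \<le> c * (u z - u x)"
    using abc min by simp_all
  moreover have "b * (u y - u x) \<le> u y - u x" "c * (u z - u x) \<le> u z - u x"
    using abc min by (auto intro: mult_left_le_one_le)
  ultimately show ?thesis
    using abc(1-4) by (intro conjI; linarith)
qed

lemma measure_triangle_mult_norm_grad_le:
  fixes x y z :: pt
  assumes sreg: "(diameter (convex hull {x,y,z}))\<^sup>2 \<le> \<kappa> * measure lebesgue (convex hull {x,y,z})"
    and "x \<noteq> y" "x \<noteq> z" and g: "g \<bullet> (y - x) = dy" "g \<bullet> (z - x) = dz" and "0 \<le> dy" "0 \<le> dz"
  shows "measure lebesgue (convex hull {x,y,z}) * norm g \<le> \<kappa> * dist x y / 4 * dy + \<kappa> * dist x z / 4 * dz"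
proof -
  have sreg': "(diameter (convex hull {x,z,y}))\<^sup>2 \<le> \<kappa> * measure lebesgue (convex hull {x,z,y})"
    using sreg by (simp add: insert_commute)
  define d where "d = diameter (convex hull {x,y,z})"
  have "dist x y \<le> d" "dist x z \<le> d"
    unfolding d_def by (auto intro!: diameter_bounded_bound finite_imp_bounded_convex_hull hull_inc)
  moreover have "d \<le> \<kappa> * dist x y / 2" "d \<le> \<kappa> * dist x z / 2"
    using shape_regular_triangle(3)[OF sreg \<open>x \<noteq> y\<close>] shape_regular_triangle(3)[OF sreg' \<open>x \<noteq> z\<close>]
    by (simp_all add: d_def insert_commute)
  ultimately have "dist x z \<le> \<kappa> * dist x y / 2" "dist x y \<le> \<kappa> * dist x z / 2"
    by linarith+
  then have "dy * dist x z + dz * dist x y \<le> dy * (\<kappa> * dist x y / 2) + dz * (\<kappa> * dist x z / 2)"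
    using \<open>0 \<le> dy\<close> \<open>0 \<le> dz\<close> by (intro add_mono mult_left_mono)
  moreover have "norm g * \<bar>cross2 (y - x) (z - x)\<bar> \<le> dy * dist x z + dz * dist x y"
    using norm_mult_abs_cross2_le[of g "y - x" "z - x"] g \<open>0 \<le> dy\<close> \<open>0 \<le> dz\<close>
    by (simp add: dist_norm norm_minus_commute)
  ultimately show ?thesis
    unfolding measure_triangle by (simp add: field_simps)
qed

lemma measure_triangle_mult_add_le:
  fixes x y z :: pt
  assumes sreg: "(diameter (convex hull {x,y,z}))\<^sup>2 \<le> \<kappa> * measure lebesgue (convex hull {x,y,z})"
    and "x \<noteq> y" "x \<noteq> z" "0 \<le> dy" "0 \<le> dz"
  shows "measure lebesgue (convex hull {x,y,z}) * (dy + dz) \<le> \<kappa> * (dist x y)\<^sup>2 / 4 * dy + \<kappa> * (dist x z)\<^sup>2 / 4 * dz"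
proof -
  have "(diameter (convex hull {x,z,y}))\<^sup>2 \<le> \<kappa> * measure lebesgue (convex hull {x,z,y})"
    using sreg by (simp add: insert_commute)
  then have "measure lebesgue (convex hull {x,y,z}) \<le> \<kappa> * (dist x y)\<^sup>2 / 4"
    "measure lebesgue (convex hull {x,y,z}) \<le> \<kappa> * (dist x z)\<^sup>2 / 4"
    using shape_regular_triangle(4)[OF sreg \<open>x \<noteq> y\<close>] shape_regular_triangle(4)[of x z y, OF _ \<open>x \<noteq> z\<close>]
    by (simp_all add: insert_commute)
  then have "measure lebesgue (convex hull {x,y,z}) * dy + measure lebesgue (convex hull {x,y,z}) * dz
      \<le> \<kappa> * (dist x y)\<^sup>2 / 4 * dy + \<kappa> * (dist x z)\<^sup>2 / 4 * dz"
    using \<open>0 \<le> dy\<close> \<open>0 \<le> dz\<close> by (intro add_mono mult_right_mono)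
  then show ?thesis
    by (simp only: distrib_left)
qed

section \<open>The element form\<close>

lemma set_integrable_continuous_compact:
  fixes f :: "pt \<Rightarrow> real"
  assumes "compact S" "continuous_on S f"
  shows "set_integrable lebesgue S f"
proof -
  have i: "integrable lborel (\<lambda>x. indicator S x *\<^sub>R f x)"
    by (rule borel_integrable_compact[OF assms])
  then have "integrable lebesgue (\<lambda>x. indicator S x *\<^sub>R f x)"
    using integrable_completion[OF borel_measurable_integrable[OF i]] by simp
  then show ?thesis
    unfolding set_integrable_def .
qed

lemma set_integral_const_compact:
  assumes "compact (S :: pt set)"
  shows "(LINT q:S|lebesgue. k) = measure lebesgue S * k"
proof -
  have "S \<in> sets lebesgue" "emeasure lebesgue S \<noteq> \<infinity>"
    using lmeasurable_compact[OF assms] by (auto simp: fmeasurable_def)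
  from set_integral_const[OF this, of k] show ?thesis
    by simp
qed

lemma convection_term_le:
  fixes b :: "pt \<Rightarrow> pt" and \<psi> :: "pt \<Rightarrow> real"
  assumes S: "compact S" and b: "AE q in lebesgue. q \<in> S \<longrightarrow> norm (b q) \<le> L" and "0 \<le> L"
    and \<psi>: "\<forall>q\<in>S. 0 \<le> \<psi> q \<and> \<psi> q \<le> 1"
  shows "(LINT q:S|lebesgue. (b q \<bullet> g) * \<psi> q) \<le> measure lebesgue S * (L * norm g)"
proof -
  have "(LINT q:S|lebesgue. (b q \<bullet> g) * \<psi> q) \<le> (LINT q:S|lebesgue. L * norm g)"
    unfolding set_lebesgue_integral_def
  proof (rule integral_mono_AE')
    show "integrable lebesgue (\<lambda>q. indicator S q *\<^sub>R (L * norm g))"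
      using set_integrable_continuous_compact[OF S continuous_on_const] unfolding set_integrable_def .
    show "AE q in lebesgue. indicator S q *\<^sub>R ((b q \<bullet> g) * \<psi> q) \<le> indicator S q *\<^sub>R (L * norm g)"
      using b
    proof (rule eventually_mono)
      fix q assume bq: "q \<in> S \<longrightarrow> norm (b q) \<le> L"
      show "indicator S q *\<^sub>R ((b q \<bullet> g) * \<psi> q) \<le> indicator S q *\<^sub>R (L * norm g)"
      proof (cases "q \<in> S")
        case True
        have "(b q \<bullet> g) * \<psi> q \<le> \<bar>b q \<bullet> g\<bar> * 1"
          using \<psi> True by (intro mult_mono) auto
        also have "\<dots> \<le> norm (b q) * norm g"
          using Cauchy_Schwarz_ineq2 by simp
        also have "\<dots> \<le> L * norm g"
          using bq True by (intro mult_right_mono) auto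
        finally show ?thesis
          using True by simp
      qed simp
    qed
    show "AE q in lebesgue. 0 \<le> indicator S q *\<^sub>R (L * norm g)"
      using \<open>0 \<le> L\<close> by (simp add: indicator_def)
  qed
  then show ?thesis
    using set_integral_const_compact[OF S] by (simp add: ac_simps)
qed

text \<open>Here the sign hypothesis on the minimum value \<open>m\<close> of \<open>u\<close> is used: the part
  \<open>\<sigma> m \<integral>\<psi>\<close> of the reaction term is nonpositive.\<close>

lemma reaction_term_le:
  fixes u \<psi> :: "pt \<Rightarrow> real"
  assumes S: "compact S" and cont: "continuous_on S u" "continuous_on S \<psi>"
    and bounds: "\<forall>q\<in>S. 0 \<le> \<psi> q \<and> \<psi> q \<le> 1 \<and> m \<le> u q \<and> u q - m \<le> K"
    and "0 \<le> \<sigma>" and sign: "m < 0 \<or> \<sigma> = 0"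
  shows "\<sigma> * (LINT q:S|lebesgue. u q * \<psi> q) \<le> \<sigma> * (measure lebesgue S * K)"
proof -
  have int: "set_integrable lebesgue S f" if "continuous_on S f" for f :: "pt \<Rightarrow> real"
    using set_integrable_continuous_compact[OF S that] .
  have "(LINT q:S|lebesgue. u q * \<psi> q) \<le> (LINT q:S|lebesgue. K + m * \<psi> q)"
  proof (rule set_integral_mono[OF int int])
    fix q assume q: "q \<in> S"
    have "(u q - m) * \<psi> q \<le> K * 1"
      using bounds q by (intro mult_mono) auto
    then show "u q * \<psi> q \<le> K + m * \<psi> q"
      by (simp add: algebra_simps)
  qed (auto intro!: continuous_intros cont)
  also have "\<dots> = measure lebesgue S * K + m * (LINT q:S|lebesgue. \<psi> q)"
    using set_integral_add(2)[OF int int, of "\<lambda>_. K" "\<lambda>q. m * \<psi> q"] set_integral_const_compact[OF S]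
    by (simp add: continuous_intros cont)
  finally have "\<sigma> * (LINT q:S|lebesgue. u q * \<psi> q)
      \<le> \<sigma> * (measure lebesgue S * K + m * (LINT q:S|lebesgue. \<psi> q))"
    using \<open>0 \<le> \<sigma>\<close> by (rule mult_left_mono)
  moreover have "0 \<le> (LINT q:S|lebesgue. \<psi> q)"
    using set_integral_mono[OF int int, of "\<lambda>_. 0" \<psi>] bounds cont by simp
  then have "\<sigma> * (m * (LINT q:S|lebesgue. \<psi> q)) \<le> 0"
    using sign \<open>0 \<le> \<sigma>\<close> by (metis mult_nonneg_nonpos mult_nonpos_nonneg less_imp_le mult_zero_left)
  ultimately show ?thesis
    by (simp add: distrib_left)
qed

lemma Linf_field_AE_bound:
  assumes "Linf_field \<Omega> b" "open \<Omega>" "\<Omega> \<noteq> {}"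
  shows "0 \<le> Linf_norm \<Omega> b" "AE q in lebesgue. q \<in> \<Omega> \<longrightarrow> norm (b q) \<le> Linf_norm \<Omega> b"
proof -
  define E where "E = esssup (restrict_space lebesgue \<Omega>) (\<lambda>x. ereal (norm (b x)))"
  define L where "L = Linf_norm \<Omega> b"
  have L: "L = real_of_ereal E"
    unfolding L_def E_def Linf_norm_def ..
  have "E < \<infinity>"
    using assms(1) unfolding Linf_field_def E_def by simp
  have "AE q in restrict_space lebesgue \<Omega>. ereal (norm (b q)) \<le> E"
    unfolding E_def by (rule esssup_AE)
  then have AE\<Omega>: "AE q in restrict_space lebesgue \<Omega>. 0 \<le> L \<and> norm (b q) \<le> L"
  proof (rule eventually_mono)
    fix q assume "ereal (norm (b q)) \<le> E"
    with \<open>E < \<infinity>\<close> show "0 \<le> L \<and> norm (b q) \<le> L"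
      unfolding L by (cases E) (auto intro: order_trans[OF norm_ge_zero])
  qed
  have "\<Omega> \<inter> space lebesgue \<in> sets lebesgue"
    using borel_open[OF assms(2)] by simp
  from AE\<Omega>[unfolded AE_restrict_space_iff[OF this]]
  have AE: "AE q in lebesgue. q \<in> \<Omega> \<longrightarrow> 0 \<le> L \<and> norm (b q) \<le> L" .
  then show "AE q in lebesgue. q \<in> \<Omega> \<longrightarrow> norm (b q) \<le> Linf_norm \<Omega> b"
    unfolding L_def by (rule eventually_mono) auto
  show "0 \<le> Linf_norm \<Omega> b"
  proof (rule ccontr)
    assume "\<not> 0 \<le> Linf_norm \<Omega> b"
    then have "AE q in lebesgue. q \<notin> \<Omega>"
      using AE unfolding L_def by (rule_tac eventually_mono) auto
    then have null: "emeasure lebesgue \<Omega> = 0"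
      using AE_iff_measurable[of \<Omega> lebesgue "\<lambda>q. q \<notin> \<Omega>"] borel_open[OF assms(2)] by auto
    obtain x r where r: "r > 0" "ball x r \<subseteq> \<Omega>"
      using assms(2,3) open_contains_ball by blast
    then have "emeasure lebesgue (ball x r) = 0"
      using null emeasure_mono[of "ball x r" \<Omega> lebesgue] borel_open[OF assms(2)] by simp
    then show False
      using content_ball_pos[OF r(1), of x] by (simp add: measure_def)
  qed
qed

lemma AE_convex_hull_of_AE_interior:
  assumes "AE q in lebesgue. q \<in> \<Omega> \<longrightarrow> P q" "interior (convex hull T) \<subseteq> \<Omega>" "finite (T :: pt set)"
  shows "AE q in lebesgue. q \<in> convex hull T \<longrightarrow> P q"
proof -
  have "negligible (frontier (convex hull T))"
    by (rule negligible_convex_frontier) simp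
  then have "AE q in lebesgue. q \<notin> frontier (convex hull T)"
    by (intro AE_not_in) (simp add: negligible_iff_null_sets)
  have "closed (convex hull T)"
    using assms(3) by (simp add: compact_imp_closed finite_imp_compact_convex_hull)
  show ?thesis
    using \<open>AE q in lebesgue. q \<notin> frontier (convex hull T)\<close> assms(1)
  proof eventually_elim
    case (elim q)
    then show ?case
      using assms(2) \<open>closed (convex hull T)\<close> by (auto simp: frontier_def closure_closed)
  qed
qed

lemma convection_triangle_le:
  fixes x y z :: pt
  assumes sreg: "(diameter (convex hull {x,y,z}))\<^sup>2 \<le> \<kappa> * measure lebesgue (convex hull {x,y,z})"
    and "x \<noteq> y" "x \<noteq> z" and g: "g \<bullet> (y - x) = dy" "g \<bullet> (z - x) = dz" and "0 \<le> dy" "0 \<le> dz"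
    and b: "AE q in lebesgue. q \<in> convex hull {x,y,z} \<longrightarrow> norm (b q) \<le> L" and "0 \<le> L"
    and \<psi>: "\<forall>q\<in>convex hull {x,y,z}. 0 \<le> \<psi> q \<and> \<psi> q \<le> 1"
  shows "(LINT q:convex hull {x,y,z}|lebesgue. (b q \<bullet> g) * \<psi> q)
    \<le> L * \<kappa> * dist x y / 4 * dy + L * \<kappa> * dist x z / 4 * dz"
proof -
  have "(LINT q:convex hull {x,y,z}|lebesgue. (b q \<bullet> g) * \<psi> q)
      \<le> measure lebesgue (convex hull {x,y,z}) * norm g * L"
    using convection_term_le[OF _ b \<open>0 \<le> L\<close> \<psi>] by (simp add: finite_imp_compact_convex_hull ac_simps)
  also have "\<dots> \<le> (\<kappa> * dist x y / 4 * dy + \<kappa> * dist x z / 4 * dz) * L"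
    using measure_triangle_mult_norm_grad_le[OF sreg assms(2-7)] \<open>0 \<le> L\<close> by (rule mult_right_mono)
  finally show ?thesis
    by (simp add: algebra_simps)
qed

definition elem_form :: "real \<Rightarrow> (pt \<Rightarrow> pt) \<Rightarrow> real \<Rightarrow> pt set \<Rightarrow> (pt \<Rightarrow> real) \<Rightarrow> (pt \<Rightarrow> real) \<Rightarrow> real" where
  "elem_form \<epsilon> b \<sigma> T u v =
      \<epsilon> * (LINT x:convex hull T|lebesgue. tgrad T u \<bullet> tgrad T v)
    + (LINT x:convex hull T|lebesgue. (b x \<bullet> tgrad T u) * v x)
    + \<sigma> * (LINT x:convex hull T|lebesgue. u x * v x)"

lemma a_form_eq_sum_elem_form: "a_form \<T> \<epsilon> b \<sigma> u v = (\<Sum>T\<in>\<T>. elem_form \<epsilon> b \<sigma> T u v)"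
  unfolding a_form_def elem_form_def ..

text \<open>The share of the edge \<open>[x,y]\<close>, seen from the triangle with third vertex \<open>z\<close>, in the
  bound for the row of \<open>x\<close>.\<close>

definition edge_share :: "real \<Rightarrow> real \<Rightarrow> real \<Rightarrow> real \<Rightarrow> pt \<Rightarrow> pt \<Rightarrow> pt \<Rightarrow> (pt \<Rightarrow> real) \<Rightarrow> real" where
  "edge_share \<epsilon> L \<sigma> \<kappa> z x y u =
     (- (\<epsilon> / 2) * cot (angle_at z x y) + L * \<kappa> * dist x y / 4 + \<sigma> * \<kappa> * (dist x y)\<^sup>2 / 4) * (u y - u x)"

lemma elem_form_hat_le:
  assumes sreg: "(diameter (convex hull {x,y,z}))\<^sup>2 \<le> \<kappa> * measure lebesgue (convex hull {x,y,z})"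
    and "x \<noteq> y" "x \<noteq> z"
    and u: "\<forall>q\<in>convex hull {x,y,z}. u q = gu \<bullet> q + cu"
    and \<psi>: "\<forall>q\<in>convex hull {x,y,z}. \<psi> q = gp \<bullet> q + cp" "\<psi> x = 1" "\<psi> y = 0" "\<psi> z = 0"
    and min: "u x \<le> u y" "u x \<le> u z"
    and b: "AE q in lebesgue. q \<in> convex hull {x,y,z} \<longrightarrow> norm (b q) \<le> L"
    and "0 \<le> L" "0 \<le> \<sigma>" "0 \<le> \<epsilon>" and sign: "u x < 0 \<or> \<sigma> = 0"
  shows "elem_form \<epsilon> b \<sigma> {x,y,z} u \<psi> \<le> edge_share \<epsilon> L \<sigma> \<kappa> z x y u + edge_share \<epsilon> L \<sigma> \<kappa> y x z u"
proof -
  define S where "S = convex hull {x,y,z}"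
  define dy dz where "dy = u y - u x" and "dz = u z - u x"
  have S: "compact S"
    unfolding S_def by (simp add: finite_imp_compact_convex_hull)
  have D: "cross2 (y - x) (z - x) \<noteq> 0"
    by (rule shape_regular_triangle(1)[OF sreg \<open>x \<noteq> y\<close>])
  have "x \<in> S" "y \<in> S" "z \<in> S"
    unfolding S_def by (auto intro: hull_inc)
  then have g: "gu \<bullet> (y - x) = dy" "gu \<bullet> (z - x) = dz" "gp \<bullet> (y - x) = -1" "gp \<bullet> (z - x) = -1"
    using u \<psi> unfolding S_def dy_def dz_def by (auto simp: inner_diff_right)
  have "0 \<le> dy" "0 \<le> dz"
    using min by (simp_all add: dy_def dz_def)
  have bounds: "\<forall>q\<in>S. 0 \<le> \<psi> q \<and> \<psi> q \<le> 1 \<and> u x \<le> u q \<and> u q - u x \<le> dy + dz"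
    using hat_function_triangle_bounds[OF u \<psi> min] unfolding S_def dy_def dz_def by blast
  have "\<epsilon> * (LINT q:S|lebesgue. gu \<bullet> gp) = \<epsilon> * (measure lebesgue S * (gu \<bullet> gp))"
    by (simp add: set_integral_const_compact[OF S])
  also have "\<dots> = \<epsilon> * (- (cot (angle_at z x y) * dy + cot (angle_at y x z) * dz) / 2)"
    unfolding S_def measure_triangle_mult_inner_grad[OF D g] ..
  finally have diffusion: "\<epsilon> * (LINT q:S|lebesgue. gu \<bullet> gp)
      = - (\<epsilon> / 2) * cot (angle_at z x y) * dy - (\<epsilon> / 2) * cot (angle_at y x z) * dz"
    by (simp add: algebra_simps)
  have convection: "(LINT q:S|lebesgue. (b q \<bullet> gu) * \<psi> q)
      \<le> L * \<kappa> * dist x y / 4 * dy + L * \<kappa> * dist x z / 4 * dz"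
    using convection_triangle_le[OF sreg \<open>x \<noteq> y\<close> \<open>x \<noteq> z\<close> g(1,2) \<open>0 \<le> dy\<close> \<open>0 \<le> dz\<close> b \<open>0 \<le> L\<close>] bounds
    unfolding S_def by blast
  have "continuous_on S u" "continuous_on S \<psi>"
    using u \<psi>(1) unfolding S_def by (auto intro!: continuous_intros cong: continuous_on_cong)
  then have "\<sigma> * (LINT q:S|lebesgue. u q * \<psi> q) \<le> \<sigma> * (measure lebesgue S * (dy + dz))"
    using reaction_term_le[OF S _ _ bounds \<open>0 \<le> \<sigma>\<close> sign] by blast
  also have "\<dots> \<le> \<sigma> * (\<kappa> * (dist x y)\<^sup>2 / 4 * dy + \<kappa> * (dist x z)\<^sup>2 / 4 * dz)"
    using measure_triangle_mult_add_le[OF sreg \<open>x \<noteq> y\<close> \<open>x \<noteq> z\<close> \<open>0 \<le> dy\<close> \<open>0 \<le> dz\<close>] \<open>0 \<le> \<sigma>\<close>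
    unfolding S_def by (rule mult_left_mono)
  finally have reaction: "\<sigma> * (LINT q:S|lebesgue. u q * \<psi> q)
      \<le> \<sigma> * \<kappa> * (dist x y)\<^sup>2 / 4 * dy + \<sigma> * \<kappa> * (dist x z)\<^sup>2 / 4 * dz"
    by (simp add: algebra_simps)
  have "tgrad {x,y,z} u = gu" "tgrad {x,y,z} \<psi> = gp"
    using tgrad_eqI[OF D u] tgrad_eqI[OF D \<psi>(1)] by auto
  then show ?thesis
    using diffusion convection reaction
    unfolding elem_form_def edge_share_def S_def[symmetric] dy_def[symmetric] dz_def[symmetric]
    by (simp add: algebra_simps)
qed

section \<open>Edge quantities and the stabilization\<close>

lemma hE_doubleton: "hE {a,b} = dist a b"
proof -
  have "\<exists>a' b'. {a,b} = {a',b'} \<and> hE {a,b} = dist a' b'"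
    unfolding hE_def by (rule someI_ex) blast
  then show ?thesis
    by (auto simp: doubleton_eq_iff dist_commute)
qed

lemma abs_tder_doubleton: "abs_tder {a,b} u = \<bar>u b - u a\<bar> / dist a b"
proof -
  have "\<exists>a' b'. {a,b} = {a',b'} \<and> abs_tder {a,b} u = \<bar>u b' - u a'\<bar> / dist a' b'"
    unfolding abs_tder_def by (rule someI_ex) blast
  then show ?thesis
    by (auto simp: doubleton_eq_iff dist_commute abs_minus_commute)
qed

lemma edge_int_tt_doubleton:
  "edge_int_tt {a,b} u v = dist a b * (((u b - u a) / dist a b) * ((v b - v a) / dist a b))"
proof -
  have "\<exists>a' b'. {a,b} = {a',b'} \<and>
      edge_int_tt {a,b} u v = dist a' b' * (((u b' - u a') / dist a' b') * ((v b' - v a') / dist a' b'))"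
    unfolding edge_int_tt_def by (rule someI_ex) blast
  then show ?thesis
    by (auto simp: doubleton_eq_iff dist_commute algebra_simps)
qed

lemma xi_node_bounds: "0 \<le> xi_node \<T> w x" "xi_node \<T> w x \<le> 1"
proof -
  have "\<bar>\<Sum>y\<in>nbrs \<T> x. w x - w y\<bar> \<le> (\<Sum>y\<in>nbrs \<T> x. \<bar>w x - w y\<bar>)"
    by (rule sum_abs)
  then show "0 \<le> xi_node \<T> w x" "xi_node \<T> w x \<le> 1"
    unfolding xi_node_def Let_def by (auto simp: divide_le_eq_1 sum_nonneg)
qed

text \<open>At a local minimum with a strictly larger neighbour all differences \<open>w x - w y\<close> have the
  same sign, so the shock detector \<open>\<xi>\<close> attains its maximal value.\<close>

lemma xi_node_eq_1_at_min:
  assumes "finite (nbrs \<T> x)" "\<forall>y\<in>nbrs \<T> x. w x \<le> w y" "v \<in> nbrs \<T> x" "w x < w v"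
  shows "xi_node \<T> w x = 1"
proof -
  let ?D = "\<Sum>y\<in>nbrs \<T> x. \<bar>w x - w y\<bar>"
  have "0 < \<bar>w x - w v\<bar>"
    using assms(4) by simp
  also have "\<bar>w x - w v\<bar> \<le> ?D"
    using member_le_sum[of v "nbrs \<T> x" "\<lambda>y. \<bar>w x - w y\<bar>"] assms(1,3) by auto
  finally have "?D > 0" .
  moreover have "(\<Sum>y\<in>nbrs \<T> x. w x - w y) = - ?D"
    using assms(2) by (simp add: sum_negf[symmetric])
  ultimately show ?thesis
    unfolding xi_node_def Let_def by simp
qed

lemma alpha_E_ge_1:
  assumes "xi_node \<T> w x = 1" "p \<ge> 1"
  shows "alpha_E \<T> p w {x,v} \<ge> 1"
proof -
  define f where "f a b t = ((1 - t) * xi_node \<T> w a + t * xi_node \<T> w b) powr p" for a b and t :: real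
  have bdd: "bdd_above (f a b ` {0..1})" for a b
  proof (rule bdd_aboveI2)
    fix t :: real assume t: "t \<in> {0..1}"
    have "0 \<le> (1 - t) * xi_node \<T> w a + t * xi_node \<T> w b"
      using t xi_node_bounds[of \<T> w] by auto
    moreover have "(1 - t) * xi_node \<T> w a + t * xi_node \<T> w b \<le> (1 - t) * 1 + t * 1"
      using t xi_node_bounds[of \<T> w] by (intro add_mono mult_left_mono) auto
    ultimately show "f a b t \<le> 1"
      unfolding f_def using powr_mono2[of p _ 1] assms(2) by simp
  qed
  have "\<exists>a b. {x,v} = {a,b} \<and> alpha_E \<T> p w {x,v} = (SUP t\<in>{0..1}. f a b t)"
    unfolding alpha_E_def f_def by (rule someI_ex) blast
  then obtain a b where ab: "{x,v} = {a,b}" "alpha_E \<T> p w {x,v} = (SUP t\<in>{0..1}. f a b t)"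
    by blast
  have "f a b 0 = 1 \<or> f a b 1 = 1"
    using assms(1) ab(1) unfolding f_def by (auto simp: doubleton_eq_iff)
  then show ?thesis
    using cSUP_upper[OF _ bdd, of 0 a b] cSUP_upper[OF _ bdd, of 1 a b] ab(2) by auto
qed

lemma Vh_affine_on_triangle: "w \<in> Vh \<T> \<Longrightarrow> T \<in> \<T> \<Longrightarrow> \<exists>g c. \<forall>q\<in>convex hull T. w q = g \<bullet> q + c"
  unfolding Vh_def by blast

lemma Vh_uminus: "u \<in> Vh \<T> \<Longrightarrow> (\<lambda>x. - u x) \<in> Vh \<T>"
proof -
  assume u: "u \<in> Vh \<T>"
  have "\<exists>g c. \<forall>x\<in>convex hull T. - u x = g \<bullet> x + c" if T: "T \<in> \<T>" for T
  proof -
    obtain g c where "\<forall>x\<in>convex hull T. u x = g \<bullet> x + c"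
      using Vh_affine_on_triangle[OF u T] by blast
    then have "\<forall>x\<in>convex hull T. - u x = (- g) \<bullet> x + (- c)"
      by simp
    then show ?thesis
      by blast
  qed
  moreover have "continuous_on (\<Union>T\<in>\<T>. convex hull T) (\<lambda>x. - u x)"
    using u unfolding Vh_def by (auto intro: continuous_on_minus)
  ultimately show ?thesis
    unfolding Vh_def by blast
qed

lemma abs_tder_uminus: "abs_tder E (\<lambda>x. - u x) = abs_tder E u"
  unfolding abs_tder_def by (simp add: abs_minus_commute)

lemma xi_node_uminus: "xi_node \<T> (\<lambda>x. - u x) = xi_node \<T> u"
proof
  fix x
  have "(\<Sum>y\<in>nbrs \<T> x. - u x - - u y) = (\<Sum>y\<in>nbrs \<T> x. - (u x - u y))"
    by simp
  then have "(\<Sum>y\<in>nbrs \<T> x. - u x - - u y) = - (\<Sum>y\<in>nbrs \<T> x. u x - u y)"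
    by (simp only: sum_negf)
  moreover have "(\<Sum>y\<in>nbrs \<T> x. \<bar>- u x - - u y\<bar>) = (\<Sum>y\<in>nbrs \<T> x. \<bar>u x - u y\<bar>)"
    by (simp add: abs_minus_commute)
  ultimately show "xi_node \<T> (\<lambda>x. - u x) x = xi_node \<T> u x"
    unfolding xi_node_def Let_def by simp
qed

lemma d_form_uminus: "d_form \<T> \<gamma>0 p (\<lambda>x. - u x) (\<lambda>x. - u x) \<psi> = - d_form \<T> \<gamma>0 p u u \<psi>"
  unfolding d_form_def sum_negf[symmetric]
proof (rule sum.cong[OF refl])
  fix E assume "E \<in> int_edges \<T>"
  then have "card E = 2"
    unfolding int_edges_def edges_def by simp
  then obtain a c where E: "E = {a,c}"
    unfolding card_2_iff by blast
  have "alpha_E \<T> p (\<lambda>x. - u x) E = alpha_E \<T> p u E"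
    unfolding alpha_E_def xi_node_uminus ..
  moreover have "edge_int_tt E (\<lambda>x. - u x) \<psi> = - edge_int_tt E u \<psi>"
    unfolding E edge_int_tt_doubleton minus_diff_minus by (simp only: minus_divide_left mult_minus_right)
  ultimately show "\<gamma>0 * (hE E)\<^sup>2 * alpha_E \<T> p (\<lambda>x. - u x) E * edge_int_tt E (\<lambda>x. - u x) \<psi>
      = - (\<gamma>0 * (hE E)\<^sup>2 * alpha_E \<T> p u E * edge_int_tt E u \<psi>)"
    by simp
qed

section \<open>Shape-regular triangulations\<close>

locale shape_regular_mesh =
  fixes \<T> :: "pt set set" and \<kappa> :: real
  assumes conforming: "conforming_triangulation \<T>" and regular: "shape_regular \<kappa> \<T>"
begin

lemma finite_mesh: "finite \<T>"
  using conforming unfolding conforming_triangulation_def by simp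

lemma card_triangle: "T \<in> \<T> \<Longrightarrow> card T = 3"
  using conforming unfolding conforming_triangulation_def by simp

lemma finite_triangle: "T \<in> \<T> \<Longrightarrow> finite T"
  using card_triangle by (simp add: card_ge_0_finite)

lemma convex_hull_Int: "T \<in> \<T> \<Longrightarrow> T' \<in> \<T> \<Longrightarrow> convex hull T \<inter> convex hull T' = convex hull (T \<inter> T')"
  using conforming unfolding conforming_triangulation_def by blast

lemma shape_regular_triangle_at:
  "T \<in> \<T> \<Longrightarrow> (diameter (convex hull T))\<^sup>2 \<le> \<kappa> * measure lebesgue (convex hull T)"
  using regular unfolding shape_regular_def by blast

lemma triangle_eq_insert1:
  assumes "T \<in> \<T>" "x \<in> T"
  obtains y z where "T = {x,y,z}" "y \<noteq> x" "z \<noteq> x" "y \<noteq> z"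
proof -
  obtain a b c where "T = {a,b,c}" "a \<noteq> b" "b \<noteq> c" "a \<noteq> c"
    using card_triangle[OF assms(1)] card_3_iff by metis
  with assms(2) that show ?thesis
    by (auto simp: insert_commute)
qed

lemma triangle_eq_insert2:
  assumes "T \<in> \<T>" "x \<in> T" "y \<in> T" "x \<noteq> y"
  obtains z where "T = {x,y,z}" "z \<noteq> x" "z \<noteq> y"
proof -
  obtain a b c where "T = {a,b,c}" "a \<noteq> b" "b \<noteq> c" "a \<noteq> c"
    using card_triangle[OF assms(1)] card_3_iff by metis
  with assms(2-4) that show ?thesis
    by (auto simp: insert_commute)
qed

lemma triangle_nondegenerate: "{x,y,z} \<in> \<T> \<Longrightarrow> x \<noteq> y \<Longrightarrow> cross2 (y - x) (z - x) \<noteq> 0"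
  using shape_regular_triangle(1)[OF shape_regular_triangle_at] .

lemma finite_nodes: "finite (nodes \<T>)"
  unfolding nodes_def using finite_mesh finite_triangle by blast

lemma finite_int_edges: "finite (int_edges \<T>)"
proof (rule finite_subset)
  show "int_edges \<T> \<subseteq> Pow (nodes \<T>)"
    unfolding int_edges_def edges_def nodes_def by auto
qed (simp add: finite_nodes)

lemma int_edge_doubleton:
  assumes "E \<in> int_edges \<T>"
  obtains a b where "E = {a,b}" "a \<noteq> b"
  using assms unfolding int_edges_def edges_def by (auto simp: card_2_iff)

lemma opposite_sides:
  assumes T: "{x,y,z} \<in> \<T>" and T': "{x,y,z'} \<in> \<T>" and "{x,y,z} \<noteq> {x,y,z'}" "x \<noteq> y"
  shows "cross2 (y - x) (z - x) * cross2 (y - x) (z' - x) < 0"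
proof (rule ccontr)
  assume "\<not> ?thesis"
  moreover have "cross2 (y - x) (z - x) \<noteq> 0" "cross2 (y - x) (z' - x) \<noteq> 0"
    using triangle_nondegenerate T T' \<open>x \<noteq> y\<close> by blast+
  ultimately have "cross2 (y - x) (z - x) * cross2 (y - x) (z' - x) > 0"
    by (simp add: not_less le_less zero_less_mult_iff mult_less_0_iff) linarith
  then obtain p where p: "p \<in> convex hull ({x,y,z} \<inter> {x,y,z'})" "cross2 (y - x) (p - x) \<noteq> 0"
    using same_side_common_point convex_hull_Int[OF T T'] by blast
  have "z \<notin> {x,y,z'}"
  proof
    assume "z \<in> {x,y,z'}"
    then have "{x,y,z} \<subseteq> {x,y,z'}"
      by auto
    then show False
      using card_subset_eq[OF finite_triangle[OF T']] card_triangle[OF T] card_triangle[OF T']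
        \<open>{x,y,z} \<noteq> {x,y,z'}\<close> by metis
  qed
  then have "p \<in> convex hull {x,y}"
    using p(1) hull_mono[of "{x,y,z} \<inter> {x,y,z'}" "{x,y}"] by auto
  then show False
    using cross2_segment p(2) by blast
qed

lemma card_triangles_at_edge_le_2:
  assumes "x \<noteq> y"
  shows "card {T\<in>\<T>. {x,y} \<subseteq> T} \<le> 2"
proof -
  let ?S = "{T\<in>\<T>. {x,y} \<subseteq> T}"
  have three: False
    if T: "T1 \<in> ?S" "T2 \<in> ?S" "T3 \<in> ?S" and ne: "T1 \<noteq> T2" "T1 \<noteq> T3" "T2 \<noteq> T3" for T1 T2 T3
  proof -
    have "\<exists>z. T = {x,y,z}" if "T \<in> ?S" for T
      using that triangle_eq_insert2[of T x y] \<open>x \<noteq> y\<close> by (metis (no_types, lifting) insert_subset mem_Collect_eq)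
    then obtain z1 z2 z3 where z: "T1 = {x,y,z1}" "T2 = {x,y,z2}" "T3 = {x,y,z3}"
      using T by meson
    then have "cross2 (y - x) (z1 - x) * cross2 (y - x) (z2 - x) < 0"
      "cross2 (y - x) (z1 - x) * cross2 (y - x) (z3 - x) < 0"
      "cross2 (y - x) (z2 - x) * cross2 (y - x) (z3 - x) < 0"
      using opposite_sides T ne \<open>x \<noteq> y\<close> by auto
    then show False
      by (smt (verit) mult_less_0_iff)
  qed
  have "finite ?S"
    using finite_mesh by simp
  show ?thesis
  proof (cases "\<exists>T1\<in>?S. \<exists>T2\<in>?S. T1 \<noteq> T2")
    case True
    then obtain T1 T2 where "T1 \<in> ?S" "T2 \<in> ?S" "T1 \<noteq> T2"
      by blast
    with three have "?S \<subseteq> {T1, T2}"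
      by blast
    then have "card ?S \<le> card {T1, T2}"
      by (intro card_mono) auto
    also have "\<dots> \<le> 2"
      by (simp add: card_insert_if)
    finally show ?thesis .
  next
    case False
    then have "card ?S \<le> 1"
      using card_le_Suc0_iff_eq[OF \<open>finite ?S\<close>] by auto
    then show ?thesis
      by simp
  qed
qed

lemma edge_point_in_triangle:
  assumes T: "{x,y,z} \<in> \<T>" "x \<noteq> y" and s: "0 < s" "s < 1"
    and T': "T' \<in> \<T>" "(1 - s) *\<^sub>R x + s *\<^sub>R y \<in> convex hull T'"
  shows "{x,y} \<subseteq> T'"
proof (rule ccontr)
  define q where "q = (1 - s) *\<^sub>R x + s *\<^sub>R y + 0 *\<^sub>R z"
  have D: "cross2 (y - x) (z - x) \<noteq> 0"
    using triangle_nondegenerate T by blast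
  have "q \<in> convex hull {x,y,z}"
    unfolding q_def using s by (intro convex_hull_3I) auto
  then have q: "q \<in> convex hull ({x,y,z} \<inter> T')"
    using T' convex_hull_Int[OF T(1) T'(1)] by (auto simp: q_def)
  assume "\<not> {x,y} \<subseteq> T'"
  then consider "{x,y,z} \<inter> T' \<subseteq> {y,z}" | "{x,y,z} \<inter> T' \<subseteq> {x,z}"
    by auto
  then show False
  proof cases
    case 1
    then have "q \<in> convex hull {y,z}"
      using q hull_mono by blast
    then obtain u v where "q = 0 *\<^sub>R x + u *\<^sub>R y + v *\<^sub>R z" "0 + u + v = 1"
      unfolding convex_hull_2 by auto
    then show False
      using barycentric_unique[OF D, of "1 - s" s 0 0 u v] s by (simp add: q_def)
  next
    case 2
    then have "q \<in> convex hull {x,z}"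
      using q hull_mono by blast
    then obtain u v where "q = u *\<^sub>R x + 0 *\<^sub>R y + v *\<^sub>R z" "u + 0 + v = 1"
      unfolding convex_hull_2 by auto
    then show False
      using barycentric_unique[OF D, of "1 - s" s 0 u 0 v] s by (simp add: q_def)
  qed
qed

text \<open>An edge at an interior node lies in a second triangle: points of the edge near \<open>x\<close> avoid
  the closed union \<open>K\<close> of the triangles not containing the edge, and pushing such a point slightly
  away from \<open>z\<close> leaves the triangle \<open>xyz\<close> while staying in \<open>\<Omega>\<close> and outside \<open>K\<close>.\<close>

lemma exists_other_triangle_at_edge:
  assumes x: "x \<in> dom_of \<T>" and T: "{x,y,z} \<in> \<T>" and "x \<noteq> y" "x \<noteq> z"
  obtains T' where "T' \<in> \<T>" "T' \<noteq> {x,y,z}" "{x,y} \<subseteq> T'"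
proof -
  have D: "cross2 (y - x) (z - x) \<noteq> 0"
    using triangle_nondegenerate T \<open>x \<noteq> y\<close> by blast
  obtain r where r: "r > 0" "ball x r \<subseteq> (\<Union>T\<in>\<T>. convex hull T)"
    using x unfolding dom_of_def mem_interior by blast
  define K where "K = \<Union> ((\<lambda>T'. convex hull T') ` {T'\<in>\<T>. \<not> {x,y} \<subseteq> T'})"
  have "closed K"
    unfolding K_def using finite_mesh finite_triangle
    by (intro closed_Union) (auto intro!: compact_imp_closed finite_imp_compact_convex_hull)
  define s where "s = min (1/2) (r / (2 * dist x y))"
  have s: "0 < s" "s < 1" "s * dist x y \<le> r / 2"
    using r(1) \<open>x \<noteq> y\<close> by (auto simp: s_def min_def field_simps)
  define q where "q = (1 - s) *\<^sub>R x + s *\<^sub>R y"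
  have "q \<notin> K"
    using edge_point_in_triangle[OF T \<open>x \<noteq> y\<close> s(1,2)] unfolding K_def q_def by blast
  then obtain \<delta> where \<delta>: "\<delta> > 0" "ball q \<delta> \<subseteq> - K"
    using \<open>closed K\<close> open_contains_ball[of "- K"] by (auto simp: open_Compl)
  define e where "e = min \<delta> (r / 2) / (2 * norm (z - x))"
  define p where "p = q - e *\<^sub>R (z - x)"
  have "e > 0"
    using \<delta>(1) r(1) \<open>x \<noteq> z\<close> by (simp add: e_def)
  have "dist q p = min \<delta> (r / 2) / 2"
    using \<open>x \<noteq> z\<close> \<delta>(1) r(1) by (simp add: p_def e_def dist_norm)
  moreover have "dist x q = s * dist x y"
    using s(1) by (simp add: q_def dist_norm algebra_simps flip: scaleR_diff_right)
  ultimately have "p \<in> ball x r" "p \<in> ball q \<delta>"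
    using dist_triangle[of x p q] s(3) \<delta>(1) r(1) by (auto simp: dist_commute)
  then obtain T' where T': "T' \<in> \<T>" "p \<in> convex hull T'" "p \<notin> K"
    using r(2) \<delta>(2) by blast
  then have "{x,y} \<subseteq> T'"
    unfolding K_def by blast
  moreover have "p = (1 - s + e) *\<^sub>R x + s *\<^sub>R y + (- e) *\<^sub>R z"
    unfolding p_def q_def vec2_eq_iff by (simp add: algebra_simps)
  then have "p \<notin> convex hull {x,y,z}"
    using convex_hull_barycentric_nonneg[OF D, of "1 - s + e" s "- e"] \<open>e > 0\<close> by auto
  ultimately show ?thesis
    using that T' by blast
qed

lemma int_edge_at_interior_node:
  assumes "x \<in> dom_of \<T>" "T \<in> \<T>" "x \<in> T" "y \<in> T" "x \<noteq> y"
  shows "{x,y} \<in> int_edges \<T>"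
proof -
  obtain z where z: "T = {x,y,z}" "z \<noteq> x" "z \<noteq> y"
    using triangle_eq_insert2 assms(2-5) by blast
  obtain T' where T': "T' \<in> \<T>" "T' \<noteq> T" "{x,y} \<subseteq> T'"
    using exists_other_triangle_at_edge[of x y z] assms z by metis
  let ?S = "{T\<in>\<T>. {x,y} \<subseteq> T}"
  have "{T,T'} \<subseteq> ?S"
    using assms z T' by auto
  then have "card {T,T'} \<le> card ?S"
    using finite_mesh by (intro card_mono) auto
  then have "card ?S = 2"
    using T'(2) card_triangles_at_edge_le_2[OF assms(5)] by simp
  moreover have "{x,y} \<in> edges \<T>"
    unfolding edges_def using assms by auto
  ultimately show ?thesis
    unfolding int_edges_def by simp
qed

lemma a_tilde_uminus:
  assumes u: "u \<in> Vh \<T>"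
  shows "a_tilde \<T> \<epsilon> b \<sigma> \<gamma>0 p (\<lambda>x. - u x) \<psi> = - a_tilde \<T> \<epsilon> b \<sigma> \<gamma>0 p u \<psi>"
proof -
  have "tgrad T (\<lambda>x. - u x) = - tgrad T u" if T: "T \<in> \<T>" for T
  proof -
    obtain a1 a2 a3 where T_eq: "T = {a1,a2,a3}" "a1 \<noteq> a2"
      using card_triangle[OF T] card_3_iff by metis
    have D: "cross2 (a2 - a1) (a3 - a1) \<noteq> 0"
      using triangle_nondegenerate T T_eq by blast
    obtain g k where aff: "\<forall>x\<in>convex hull {a1,a2,a3}. u x = g \<bullet> x + k"
      using Vh_affine_on_triangle[OF u T] unfolding T_eq by blast
    then have "\<forall>x\<in>convex hull {a1,a2,a3}. - u x = (- g) \<bullet> x + (- k)"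
      by simp
    then show ?thesis
      unfolding T_eq tgrad_eqI[OF D aff] by (rule tgrad_eqI[OF D])
  qed
  then have "a_form \<T> \<epsilon> b \<sigma> (\<lambda>x. - u x) \<psi> = - a_form \<T> \<epsilon> b \<sigma> u \<psi>"
    unfolding a_form_def sum_negf[symmetric]
    by (intro sum.cong[OF refl]) (simp add: set_lebesgue_integral_def)
  then show ?thesis
    unfolding a_tilde_def d_form_uminus by simp
qed

end

section \<open>The row of the hat function at an interior node\<close>

definition opposite_vertex :: "pt set \<Rightarrow> pt \<Rightarrow> pt \<Rightarrow> pt" where
  "opposite_vertex T x y = (THE z. z \<in> T \<and> z \<noteq> x \<and> z \<noteq> y)"

lemma opposite_vertex_insert: "z \<noteq> x \<Longrightarrow> z \<noteq> y \<Longrightarrow> opposite_vertex {x,y,z} x y = z"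
  unfolding opposite_vertex_def by (rule the_equality) auto

locale hat_function = shape_regular_mesh +
  fixes xi :: pt and \<psi> :: "pt \<Rightarrow> real"
  assumes interior_xi: "interior_node \<T> xi" and hat_Vh: "\<psi> \<in> Vh \<T>"
    and hat_nodal: "\<forall>y\<in>nodes \<T>. \<psi> y = (if y = xi then 1 else 0)"
begin

lemma xi_in_dom: "xi \<in> dom_of \<T>"
  using interior_xi unfolding interior_node_def by simp

lemma hat_at_vertex: "T \<in> \<T> \<Longrightarrow> y \<in> T \<Longrightarrow> \<psi> y = (if y = xi then 1 else 0)"
  using hat_nodal unfolding nodes_def by blast

lemma elem_form_eq_0:
  assumes T: "T \<in> \<T>" "xi \<notin> T"
  shows "elem_form \<epsilon> b \<sigma> T u \<psi> = 0"
proof -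
  obtain a1 a2 a3 where T_eq: "T = {a1,a2,a3}" "a1 \<noteq> a2"
    using card_triangle[OF T(1)] card_3_iff by metis
  obtain g k where aff: "\<forall>q\<in>convex hull {a1,a2,a3}. \<psi> q = g \<bullet> q + k"
    using Vh_affine_on_triangle[OF hat_Vh T(1)] unfolding T_eq by blast
  have "\<psi> a1 = 0" "\<psi> a2 = 0" "\<psi> a3 = 0"
    using hat_at_vertex T unfolding T_eq by auto
  then have zero: "\<forall>q\<in>convex hull T. \<psi> q = 0"
    unfolding T_eq convex_hull_3 using affine_convex_combination3[OF aff] by auto
  then have "tgrad T \<psi> = 0"
    using tgrad_eqI[of a2 a1 a3 \<psi> 0 0] triangle_nondegenerate T(1) T_eq by simp
  moreover have "convex hull T \<in> sets lebesgue"
    using finite_triangle[OF T(1)] by (simp add: compact_imp_closed finite_imp_compact_convex_hull)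
  ultimately show ?thesis
    using zero unfolding elem_form_def by (simp add: set_lebesgue_integral_cong[of _ _ _ "\<lambda>_. 0"])
qed

lemma a_form_eq_sum_patch:
  "a_form \<T> \<epsilon> b \<sigma> u \<psi> = (\<Sum>T\<in>{T\<in>\<T>. xi \<in> T}. elem_form \<epsilon> b \<sigma> T u \<psi>)"
  unfolding a_form_eq_sum_elem_form
  by (rule sum.mono_neutral_right[OF finite_mesh]) (auto simp: elem_form_eq_0)

lemma mem_nbrs_iff: "v \<in> nbrs \<T> xi \<longleftrightarrow> v \<noteq> xi \<and> (\<exists>T\<in>\<T>. xi \<in> T \<and> v \<in> T)"
  using int_edge_at_interior_node[OF xi_in_dom]
  unfolding nbrs_def int_edges_def edges_def by auto

lemma finite_nbrs: "finite (nbrs \<T> xi)"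
  by (rule finite_subset[OF _ finite_nodes]) (auto simp: mem_nbrs_iff nodes_def)

lemma edges_at_eq_image: "edges_at \<T> xi = (\<lambda>v. {xi,v}) ` nbrs \<T> xi"
proof
  show "edges_at \<T> xi \<subseteq> (\<lambda>v. {xi,v}) ` nbrs \<T> xi"
  proof
    fix E assume "E \<in> edges_at \<T> xi"
    then have E: "E \<in> int_edges \<T>" "xi \<in> E"
      unfolding edges_at_def by auto
    obtain a c where "E = {a,c}" "a \<noteq> c"
      using E(1) by (rule int_edge_doubleton)
    then obtain v where "E = {xi,v}" "v \<noteq> xi"
      using E(2) by auto
    with E show "E \<in> (\<lambda>v. {xi,v}) ` nbrs \<T> xi"
      unfolding nbrs_def by auto
  qed
qed (auto simp: edges_at_def nbrs_def)

lemma inj_on_edge_at_xi: "inj_on (\<lambda>v. {xi,v}) (nbrs \<T> xi)"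
  by (auto simp: inj_on_def doubleton_eq_iff mem_nbrs_iff)

lemma elem_form_le_edge_shares:
  assumes T: "T \<in> \<T>" "xi \<in> T" and u: "u \<in> Vh \<T>" and min: "\<forall>v\<in>T. u xi \<le> u v"
    and b: "AE q in lebesgue. q \<in> dom_of \<T> \<longrightarrow> norm (b q) \<le> L"
    and "0 \<le> L" "0 \<le> \<sigma>" "0 \<le> \<epsilon>" and sign: "u xi < 0 \<or> \<sigma> = 0"
  shows "elem_form \<epsilon> b \<sigma> T u \<psi> \<le> (\<Sum>v\<in>T - {xi}. edge_share \<epsilon> L \<sigma> \<kappa> (opposite_vertex T xi v) xi v u)"
proof -
  obtain y z where T_eq: "T = {xi,y,z}" "y \<noteq> xi" "z \<noteq> xi" "y \<noteq> z"
    using triangle_eq_insert1[OF T] by blast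
  obtain gu cu where u_aff: "\<forall>q\<in>convex hull {xi,y,z}. u q = gu \<bullet> q + cu"
    using Vh_affine_on_triangle[OF u T(1)] unfolding T_eq by blast
  obtain gp cp where \<psi>_aff: "\<forall>q\<in>convex hull {xi,y,z}. \<psi> q = gp \<bullet> q + cp"
    using Vh_affine_on_triangle[OF hat_Vh T(1)] unfolding T_eq by blast
  have \<psi>: "\<psi> xi = 1" "\<psi> y = 0" "\<psi> z = 0"
    using hat_at_vertex T T_eq by auto
  have "u xi \<le> u y" "u xi \<le> u z"
    using min T_eq by auto
  moreover have "interior (convex hull T) \<subseteq> dom_of \<T>"
    unfolding dom_of_def using T(1) by (intro interior_mono) blast
  then have "AE q in lebesgue. q \<in> convex hull {xi,y,z} \<longrightarrow> norm (b q) \<le> L"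
    using AE_convex_hull_of_AE_interior[OF b _ finite_triangle[OF T(1)]] unfolding T_eq by blast
  ultimately have "elem_form \<epsilon> b \<sigma> T u \<psi>
      \<le> edge_share \<epsilon> L \<sigma> \<kappa> z xi y u + edge_share \<epsilon> L \<sigma> \<kappa> y xi z u"
    unfolding T_eq using shape_regular_triangle_at[OF T(1)]
    by (intro elem_form_hat_le[OF _ _ _ u_aff \<psi>_aff \<psi>]) (use T_eq assms in auto)
  moreover have "opposite_vertex T xi y = z" "opposite_vertex T xi z = y"
    using opposite_vertex_insert[of z xi y] opposite_vertex_insert[of y xi z] T_eq
    by (simp_all add: insert_commute)
  moreover have "T - {xi} = {y,z}"
    using T_eq by auto
  ultimately show ?thesis
    using T_eq(4) by simp
qed

lemma sum_patch_swap:
  "(\<Sum>T\<in>{T\<in>\<T>. xi \<in> T}. \<Sum>v\<in>T - {xi}. f T v) = (\<Sum>v\<in>nbrs \<T> xi. \<Sum>T\<in>{T\<in>\<T>. {xi,v} \<subseteq> T}. f T v)"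
proof -
  have "(\<Sum>T\<in>{T\<in>\<T>. xi \<in> T}. \<Sum>v\<in>T - {xi}. f T v)
      = (\<Sum>T\<in>{T\<in>\<T>. xi \<in> T}. \<Sum>v\<in>{v \<in> nbrs \<T> xi. v \<in> T}. f T v)"
    by (intro sum.cong) (auto simp: mem_nbrs_iff)
  also have "\<dots> = (\<Sum>v\<in>nbrs \<T> xi. \<Sum>T\<in>{T \<in> {T\<in>\<T>. xi \<in> T}. v \<in> T}. f T v)"
    using finite_mesh finite_nbrs by (intro sum.swap_restrict) auto
  also have "\<dots> = (\<Sum>v\<in>nbrs \<T> xi. \<Sum>T\<in>{T\<in>\<T>. {xi,v} \<subseteq> T}. f T v)"
    by (intro sum.cong) auto
  finally show ?thesis .
qed

text \<open>This is where the Xu--Zikatanov condition enters: the two cotangent terms of an interior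
  edge add up to a nonpositive diffusion coefficient.\<close>

lemma sum_edge_share_le:
  assumes xz: "xu_zikatanov \<T>" and v: "v \<in> nbrs \<T> xi" and "0 \<le> \<epsilon>" and "u xi \<le> u v"
  shows "(\<Sum>T\<in>{T\<in>\<T>. {xi,v} \<subseteq> T}. edge_share \<epsilon> L \<sigma> \<kappa> (opposite_vertex T xi v) xi v u)
    \<le> (L * \<kappa> * dist xi v / 2 + \<sigma> * \<kappa> * (dist xi v)\<^sup>2 / 2) * (u v - u xi)"
proof -
  have "v \<noteq> xi" "card {T\<in>\<T>. {xi,v} \<subseteq> T} = 2"
    using v unfolding nbrs_def int_edges_def by auto
  then obtain T1 T2 where T12: "{T\<in>\<T>. {xi,v} \<subseteq> T} = {T1,T2}" "T1 \<noteq> T2"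
    unfolding card_2_iff by blast
  then have T: "T1 \<in> \<T>" "{xi,v} \<subseteq> T1" "T2 \<in> \<T>" "{xi,v} \<subseteq> T2"
    by blast+
  obtain z1 where z1: "T1 = {xi,v,z1}" "z1 \<noteq> xi" "z1 \<noteq> v"
    using triangle_eq_insert2[OF T(1)] T(2) \<open>v \<noteq> xi\<close> by blast
  obtain z2 where z2: "T2 = {xi,v,z2}" "z2 \<noteq> xi" "z2 \<noteq> v"
    using triangle_eq_insert2[OF T(3)] T(4) \<open>v \<noteq> xi\<close> by blast
  have "0 \<le> cot (angle_at z1 xi v) + cot (angle_at z2 xi v)"
    using T12(2) z1 z2 \<open>v \<noteq> xi\<close>
    by (intro xz[unfolded xu_zikatanov_def, rule_format, OF T(1,3)]) auto
  then have "0 \<le> (\<epsilon> / 2) * (cot (angle_at z1 xi v) + cot (angle_at z2 xi v)) * (u v - u xi)"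
    using \<open>0 \<le> \<epsilon>\<close> \<open>u xi \<le> u v\<close> by simp
  moreover have "opposite_vertex T1 xi v = z1" "opposite_vertex T2 xi v = z2"
    using z1 z2 by (simp_all add: opposite_vertex_insert)
  moreover have "edge_share \<epsilon> L \<sigma> \<kappa> z1 xi v u + edge_share \<epsilon> L \<sigma> \<kappa> z2 xi v u
      = (L * \<kappa> * dist xi v / 2 + \<sigma> * \<kappa> * (dist xi v)\<^sup>2 / 2) * (u v - u xi)
        - (\<epsilon> / 2) * (cot (angle_at z1 xi v) + cot (angle_at z2 xi v)) * (u v - u xi)"
    by (simp add: edge_share_def field_simps)
  ultimately show ?thesis
    unfolding T12(1) using T12(2) by simp
qed

lemma min_at_nbrs:
  assumes "\<forall>x\<in>patch \<T> xi. u xi \<le> u x" "T \<in> \<T>" "xi \<in> T" "v \<in> T"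
  shows "u xi \<le> u v"
  using assms unfolding patch_def by (blast intro: hull_inc)

lemma a_form_le_at_min:
  assumes xz: "xu_zikatanov \<T>" and u: "u \<in> Vh \<T>" and min: "\<forall>x\<in>patch \<T> xi. u xi \<le> u x"
    and b: "AE q in lebesgue. q \<in> dom_of \<T> \<longrightarrow> norm (b q) \<le> L"
    and "0 \<le> L" "0 \<le> \<sigma>" "0 \<le> \<epsilon>" and sign: "u xi < 0 \<or> \<sigma> = 0"
  shows "a_form \<T> \<epsilon> b \<sigma> u \<psi>
    \<le> (\<Sum>v\<in>nbrs \<T> xi. (L * \<kappa> * dist xi v / 2 + \<sigma> * \<kappa> * (dist xi v)\<^sup>2 / 2) * (u v - u xi))"
proof -
  let ?share = "\<lambda>T v. edge_share \<epsilon> L \<sigma> \<kappa> (opposite_vertex T xi v) xi v u"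
  have "a_form \<T> \<epsilon> b \<sigma> u \<psi> = (\<Sum>T\<in>{T\<in>\<T>. xi \<in> T}. elem_form \<epsilon> b \<sigma> T u \<psi>)"
    by (rule a_form_eq_sum_patch)
  also have "\<dots> \<le> (\<Sum>T\<in>{T\<in>\<T>. xi \<in> T}. \<Sum>v\<in>T - {xi}. ?share T v)"
    using min_at_nbrs[OF min] assms(4-8) by (intro sum_mono elem_form_le_edge_shares[OF _ _ u]) auto
  also have "\<dots> = (\<Sum>v\<in>nbrs \<T> xi. \<Sum>T\<in>{T\<in>\<T>. {xi,v} \<subseteq> T}. ?share T v)"
    by (rule sum_patch_swap)
  also have "\<dots> \<le> (\<Sum>v\<in>nbrs \<T> xi. (L * \<kappa> * dist xi v / 2 + \<sigma> * \<kappa> * (dist xi v)\<^sup>2 / 2) * (u v - u xi))"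
    using min_at_nbrs[OF min] \<open>0 \<le> \<epsilon>\<close> by (intro sum_mono sum_edge_share_le[OF xz]) (auto simp: mem_nbrs_iff)
  finally show ?thesis .
qed

lemma edge_int_tt_hat_off_xi:
  assumes "E \<in> int_edges \<T>" "xi \<notin> E"
  shows "edge_int_tt E u \<psi> = 0"
proof -
  obtain a c where E: "E = {a,c}" "a \<noteq> c"
    using assms(1) by (rule int_edge_doubleton)
  then obtain T where "T \<in> \<T>" "a \<in> T" "c \<in> T"
    using assms(1) unfolding int_edges_def edges_def by auto
  then have "\<psi> a = 0" "\<psi> c = 0"
    using hat_at_vertex assms(2) E(1) by auto
  then show ?thesis
    unfolding E edge_int_tt_doubleton by simp
qed

text \<open>Along an edge on which \<open>u\<close> increases, \<open>\<alpha>_E = 1\<close> by the previous lemmas, and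
  \<open>\<partial>_t u \<partial>_t \<psi> < 0\<close>.\<close>

lemma stabilization_at_edge_le:
  assumes "\<gamma>0 > 0" "p \<ge> 1" and min: "\<forall>v\<in>nbrs \<T> xi. u xi \<le> u v" and v: "v \<in> nbrs \<T> xi"
  shows "\<gamma>0 * (hE {xi,v})\<^sup>2 * alpha_E \<T> p u {xi,v} * edge_int_tt {xi,v} u \<psi>
    \<le> - \<gamma>0 * dist xi v * (u v - u xi)"
proof -
  have "v \<noteq> xi" "v \<in> nodes \<T>" "xi \<in> nodes \<T>"
    using v unfolding mem_nbrs_iff nodes_def by auto
  then have "\<psi> xi = 1" "\<psi> v = 0" "dist xi v > 0"
    using hat_nodal by auto
  then have eq: "\<gamma>0 * (hE {xi,v})\<^sup>2 * alpha_E \<T> p u {xi,v} * edge_int_tt {xi,v} u \<psi>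
      = - \<gamma>0 * dist xi v * (alpha_E \<T> p u {xi,v} * (u v - u xi))"
    unfolding hE_doubleton edge_int_tt_doubleton by (simp add: field_simps power2_eq_square)
  have "u v - u xi \<le> alpha_E \<T> p u {xi,v} * (u v - u xi)"
  proof (cases "u xi < u v")
    case True
    then have "xi_node \<T> u xi = 1"
      using xi_node_eq_1_at_min[OF finite_nbrs min v] by blast
    then show ?thesis
      using alpha_E_ge_1 \<open>p \<ge> 1\<close> True by (simp add: mult_le_cancel_right1)
  qed (use min v in auto)
  then show ?thesis
    unfolding eq using \<open>\<gamma>0 > 0\<close> \<open>dist xi v > 0\<close> by (simp add: mult_left_mono)
qed

lemma d_form_le_at_min:
  assumes "\<gamma>0 > 0" "p \<ge> 1" and min: "\<forall>v\<in>nbrs \<T> xi. u xi \<le> u v"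
  shows "d_form \<T> \<gamma>0 p u u \<psi> \<le> (\<Sum>v\<in>nbrs \<T> xi. - \<gamma>0 * dist xi v * (u v - u xi))"
proof -
  define F where "F E = \<gamma>0 * (hE E)\<^sup>2 * alpha_E \<T> p u E * edge_int_tt E u \<psi>" for E
  have "d_form \<T> \<gamma>0 p u u \<psi> = (\<Sum>E\<in>edges_at \<T> xi. F E)"
    unfolding d_form_def F_def[symmetric]
    by (intro sum.mono_neutral_right finite_int_edges) (auto simp: edges_at_def F_def edge_int_tt_hat_off_xi)
  also have "\<dots> = (\<Sum>v\<in>nbrs \<T> xi. F {xi,v})"
    unfolding edges_at_eq_image by (rule sum.reindex[OF inj_on_edge_at_xi, unfolded comp_def])
  also have "\<dots> \<le> (\<Sum>v\<in>nbrs \<T> xi. - \<gamma>0 * dist xi v * (u v - u xi))"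
    unfolding F_def using stabilization_at_edge_le[OF assms] by (rule sum_mono)
  finally show ?thesis .
qed

lemma a_tilde_le_sum_at_min:
  assumes xz: "xu_zikatanov \<T>" and "\<epsilon> > 0" "\<sigma> \<ge> 0" "\<gamma>0 > 0" "p \<ge> 1"
    and b: "AE q in lebesgue. q \<in> dom_of \<T> \<longrightarrow> norm (b q) \<le> L" and "0 \<le> L"
    and u: "u \<in> Vh \<T>" and min: "\<forall>x\<in>patch \<T> xi. u xi \<le> u x" and sign: "u xi < 0 \<or> \<sigma> = 0"
  shows "a_tilde \<T> \<epsilon> b \<sigma> \<gamma>0 p u \<psi>
    \<le> (\<Sum>v\<in>nbrs \<T> xi. dist xi v * (L * \<kappa> / 2 + \<sigma> * \<kappa> * dist xi v / 2 - \<gamma>0) * (u v - u xi))"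
proof -
  have min_nbrs: "\<forall>v\<in>nbrs \<T> xi. u xi \<le> u v"
    using min_at_nbrs[OF min] by (auto simp: mem_nbrs_iff)
  have "a_form \<T> \<epsilon> b \<sigma> u \<psi>
      \<le> (\<Sum>v\<in>nbrs \<T> xi. (L * \<kappa> * dist xi v / 2 + \<sigma> * \<kappa> * (dist xi v)\<^sup>2 / 2) * (u v - u xi))"
    using a_form_le_at_min[OF xz u min b \<open>0 \<le> L\<close> \<open>\<sigma> \<ge> 0\<close> _ sign] \<open>\<epsilon> > 0\<close> by simp
  moreover have "d_form \<T> \<gamma>0 p u u \<psi> \<le> (\<Sum>v\<in>nbrs \<T> xi. - \<gamma>0 * dist xi v * (u v - u xi))"
    by (rule d_form_le_at_min[OF \<open>\<gamma>0 > 0\<close> \<open>p \<ge> 1\<close> min_nbrs])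
  ultimately have "a_tilde \<T> \<epsilon> b \<sigma> \<gamma>0 p u \<psi>
      \<le> (\<Sum>v\<in>nbrs \<T> xi. (L * \<kappa> * dist xi v / 2 + \<sigma> * \<kappa> * (dist xi v)\<^sup>2 / 2) * (u v - u xi)
        + - \<gamma>0 * dist xi v * (u v - u xi))"
    unfolding a_tilde_def sum.distrib by (rule add_mono)
  then show ?thesis
    by (simp add: power2_eq_square algebra_simps)
qed

lemma a_tilde_le_at_min:
  assumes xz: "xu_zikatanov \<T>" and "\<epsilon> > 0" "\<sigma> \<ge> 0" "\<gamma>0 > 0" "p \<ge> 1"
    and b: "Linf_field (dom_of \<T>) b" and C: "\<kappa> / 2 \<le> C_\<sigma>" "\<kappa> / 2 \<le> C_b"
    and \<gamma>0: "\<forall>E\<in>int_edges \<T>. \<gamma>0 > C_\<sigma> * \<sigma> * hE E + C_b * Linf_norm (dom_of \<T>) b"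
    and u: "u \<in> Vh \<T>" and min: "\<forall>x\<in>patch \<T> xi. u xi \<le> u x" and sign: "u xi < 0 \<or> \<sigma> = 0"
  shows "\<exists>c. (\<forall>E\<in>edges_at \<T> xi. c E < 0) \<and>
    a_tilde \<T> \<epsilon> b \<sigma> \<gamma>0 p u \<psi> \<le> (\<Sum>E\<in>edges_at \<T> xi. c E * abs_tder E u)"
proof -
  define L where "L = Linf_norm (dom_of \<T>) b"
  define c where "c E = (hE E)\<^sup>2 * (L * \<kappa> / 2 + \<sigma> * \<kappa> * hE E / 2 - \<gamma>0)" for E
  have "open (dom_of \<T>)" "dom_of \<T> \<noteq> {}"
    using xi_in_dom unfolding dom_of_def by auto
  note L = Linf_field_AE_bound[OF b this, folded L_def]
  have "c E < 0" if E: "E \<in> edges_at \<T> xi" for E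
  proof -
    obtain v where "E = {xi,v}" "v \<in> nbrs \<T> xi"
      using E unfolding edges_at_eq_image by blast
    then have h: "hE E > 0"
      by (auto simp: hE_doubleton mem_nbrs_iff)
    have "C_\<sigma> * (\<sigma> * hE E) + C_b * L < \<gamma>0"
      using \<gamma>0 E by (simp add: L_def edges_at_def mult.assoc)
    moreover have "\<kappa> / 2 * (\<sigma> * hE E) \<le> C_\<sigma> * (\<sigma> * hE E)" "\<kappa> / 2 * L \<le> C_b * L"
      using mult_right_mono[OF C(1), of "\<sigma> * hE E"] mult_right_mono[OF C(2) L(1)] h \<open>\<sigma> \<ge> 0\<close>
      by simp_all
    ultimately have "L * \<kappa> / 2 + \<sigma> * \<kappa> * hE E / 2 - \<gamma>0 < 0"
      by (simp add: algebra_simps)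
    then show ?thesis
      using h by (simp add: c_def mult_pos_neg)
  qed
  moreover have "c {xi,v} * abs_tder {xi,v} u
      = dist xi v * (L * \<kappa> / 2 + \<sigma> * \<kappa> * dist xi v / 2 - \<gamma>0) * (u v - u xi)" if v: "v \<in> nbrs \<T> xi" for v
  proof -
    have "dist xi v > 0" "\<bar>u v - u xi\<bar> = u v - u xi"
      using v min_at_nbrs[OF min] unfolding mem_nbrs_iff by auto
    then show ?thesis
      unfolding c_def hE_doubleton abs_tder_doubleton by (simp add: power2_eq_square)
  qed
  then have "(\<Sum>E\<in>edges_at \<T> xi. c E * abs_tder E u)
      = (\<Sum>v\<in>nbrs \<T> xi. dist xi v * (L * \<kappa> / 2 + \<sigma> * \<kappa> * dist xi v / 2 - \<gamma>0) * (u v - u xi))"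
    unfolding edges_at_eq_image sum.reindex[OF inj_on_edge_at_xi] comp_def by (rule sum.cong[OF refl])
  moreover have "a_tilde \<T> \<epsilon> b \<sigma> \<gamma>0 p u \<psi>
      \<le> (\<Sum>v\<in>nbrs \<T> xi. dist xi v * (L * \<kappa> / 2 + \<sigma> * \<kappa> * dist xi v / 2 - \<gamma>0) * (u v - u xi))"
    by (rule a_tilde_le_sum_at_min[OF assms(1-5) L(2,1) u min sign])
  ultimately show ?thesis
    by (intro exI[of _ c]) simp
qed

lemma a_tilde_ge_at_max:
  assumes xz: "xu_zikatanov \<T>" and "\<epsilon> > 0" "\<sigma> \<ge> 0" "\<gamma>0 > 0" "p \<ge> 1"
    and b: "Linf_field (dom_of \<T>) b" and C: "\<kappa> / 2 \<le> C_\<sigma>" "\<kappa> / 2 \<le> C_b"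
    and \<gamma>0: "\<forall>E\<in>int_edges \<T>. \<gamma>0 > C_\<sigma> * \<sigma> * hE E + C_b * Linf_norm (dom_of \<T>) b"
    and u: "u \<in> Vh \<T>" and max: "\<forall>x\<in>patch \<T> xi. u xi \<ge> u x" and sign: "u xi > 0 \<or> \<sigma> = 0"
  shows "\<exists>c. (\<forall>E\<in>edges_at \<T> xi. c E < 0) \<and>
    a_tilde \<T> \<epsilon> b \<sigma> \<gamma>0 p u \<psi> \<ge> - (\<Sum>E\<in>edges_at \<T> xi. c E * abs_tder E u)"
proof -
  have "\<forall>x\<in>patch \<T> xi. - u xi \<le> - u x" "- u xi < 0 \<or> \<sigma> = 0"
    using max sign by auto
  then obtain c where "\<forall>E\<in>edges_at \<T> xi. c E < 0"
    "- a_tilde \<T> \<epsilon> b \<sigma> \<gamma>0 p u \<psi> \<le> (\<Sum>E\<in>edges_at \<T> xi. c E * abs_tder E u)"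
    using a_tilde_le_at_min[OF assms(1-9) Vh_uminus[OF u]] by (auto simp: a_tilde_uminus[OF u] abs_tder_uminus)
  then show ?thesis
    by (intro exI[of _ c]) simp
qed

end

theorem theorem2p2:
  fixes \<kappa> :: real
  shows "\<exists>C0 C1. C0 > 0 \<and> C1 > 0 \<and>
    (\<forall>\<T> (\<epsilon>::real) (b::pt \<Rightarrow> pt) (\<sigma>::real) (\<gamma>0::real) (p::real).
      conforming_triangulation \<T> \<and> shape_regular \<kappa> \<T> \<and> xu_zikatanov \<T> \<and>
      \<epsilon> > 0 \<and> \<sigma> \<ge> 0 \<and> \<gamma>0 > 0 \<and> p \<ge> 1 \<and>
      Linf_field (dom_of \<T>) b \<and> div_free (dom_of \<T>) b \<and>
      (\<forall>E\<in>int_edges \<T>. \<gamma>0 > C0 * \<sigma> * hE E + C1 * Linf_norm (dom_of \<T>) b)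
      \<longrightarrow>
      (\<forall>u \<psi> xi. u \<in> Vh \<T> \<and> \<psi> \<in> Vh \<T> \<and> interior_node \<T> xi \<and>
         (\<forall>y\<in>nodes \<T>. \<psi> y = (if y = xi then 1 else 0)) \<longrightarrow>
         (((\<forall>x\<in>patch \<T> xi. u xi \<le> u x) \<and> (u xi < 0 \<or> \<sigma> = 0)) \<longrightarrow>
            (\<exists>c. (\<forall>E\<in>edges_at \<T> xi. c E < 0) \<and>
               a_tilde \<T> \<epsilon> b \<sigma> \<gamma>0 p u \<psi> \<le> (\<Sum>E\<in>edges_at \<T> xi. c E * abs_tder E u))) \<and>
         (((\<forall>x\<in>patch \<T> xi. u xi \<ge> u x) \<and> (u xi > 0 \<or> \<sigma> = 0)) \<longrightarrow>
            (\<exists>c. (\<forall>E\<in>edges_at \<T> xi. c E < 0) \<and>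
               a_tilde \<T> \<epsilon> b \<sigma> \<gamma>0 p u \<psi> \<ge> - (\<Sum>E\<in>edges_at \<T> xi. c E * abs_tder E u)))))"
  \<comment> \<open>any constants \<open>\<ge> \<kappa>/2\<close> work; the \<open>+ 1\<close> only keeps them positive when \<open>\<kappa> \<le> 0\<close>\<close>
  apply (intro exI[of _ "\<bar>\<kappa>\<bar> / 2 + 1"] conjI allI impI)
     apply (simp_all add: add_nonneg_pos)
  subgoal premises prems for \<T> \<epsilon> b \<sigma> \<gamma>0 p u \<psi> xi
  proof -
    interpret hat_function \<T> \<kappa> xi \<psi>
      using prems by unfold_locales auto
    show ?thesis
      by (rule a_tilde_le_at_min[where C_\<sigma> = "\<bar>\<kappa>\<bar> / 2 + 1" and C_b = "\<bar>\<kappa>\<bar> / 2 + 1"]) (use prems in auto)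
  qed
  subgoal premises prems for \<T> \<epsilon> b \<sigma> \<gamma>0 p u \<psi> xi
  proof -
    interpret hat_function \<T> \<kappa> xi \<psi>
      using prems by unfold_locales auto
    show ?thesis
      by (rule a_tilde_ge_at_max[where C_\<sigma> = "\<bar>\<kappa>\<bar> / 2 + 1" and C_b = "\<bar>\<kappa>\<bar> / 2 + 1"]) (use prems in auto)
  qed
  done

end
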